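(* Consider the single-queue bandit described in the context, with problem instance $(\lambda,\boldsymbol{\mu})$, $\boldsymbol\mu=(\mu_1,\dots,\mu_K)$. For every $\alpha\in(0,1)$ and every $\alpha$-consistent scheduling policy, the queue-regret satisfies $$\Psi(t)\ \ge\ \left(\frac{\lambda}{4}\,D(\boldsymbol{\mu})\,(1-\alpha)\,(K-1)\right)\frac{1}{t}$$ for infinitely many $t$, where $$D(\boldsymbol{\mu})=\frac{\Delta}{\mathrm{KL}\left(\mu_{\min},\frac{\mu^*+1}{2}\right)}.$$
   Context: Discrete-time queueing system with one queue and $K\ge 2$ servers indexed by $[K]=\{1,\dots,K\}$. Arrivals $A(t)\in\{0,1\}$ are i.i.d. Bernoulli($\lambda$) over time slots $t=1,2,\dots$; the service $R_k(t)\in\{0,1\}$ offered by server $k$ at time $t$ is Bernoulli($\mu_k$), independent across $k$, across $t$ and of the arrivals. Let $\mu^*=\max_k\mu_k$, attained at a unique server $k^*$, and assume $\lambda<\mu^*$. A scheduling policy chooses at each time $t$ a server $\kappa(t)\in[K]$ based only on past observations (the servers scheduled and the services they provided, and arrivals, up to time $t-1$) and possibly independent internal randomization; the service parameters are unknown to it. With $S(t)=R_{\kappa(t)}(t)$, the queue evolves as $Q(t)=(Q(t-1)+A(t)-S(t))^+$. The genie queue $Q^*(t)$ uses the same arrivals and always schedules $k^*$: $Q^*(t)=(Q^*(t-1)+A(t)-R_{k^*}(t))^+$. Both $Q(0)$ and $Q^*(0)$ are distributed according to the stationary distribution $\pi_{(\lambda,\mu^* )}$ of $Q^*$. The queue-regret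 is $\Psi(t)=\mathbb{E}[Q(t)-Q^*(t)]$. Notation: $\Delta=\mu^*-\max_{k\ne k^*}\mu_k$, $\mu_{\min}=\min_k\mu_k$, and $\mathrm{KL}(p,q)=p\log\frac pq+(1-p)\log\frac{1-p}{1-q}$ is the Bernoulli Kullback–Leibler divergence. A policy is $\alpha$-consistent ($\alpha\in(0,1)$) if for every problem instance $(\lambda,\boldsymbol\mu)$ of this type, $\mathbb{E}\left[\sum_{s=1}^t \mathbf 1\{\kappa(s)=k\}\right]=O(t^\alpha)$ as $t\to\infty$ for every $k\ne k^*$. *)

theory Defs
  imports "HOL-Probability.Probability" "HOL-Library.Landau_Symbols"
begin

(* Servers are indexed by {1..K}; a service-rate vector is mu :: nat => real. *)

type_synonym hist = "(nat \<times> bool \<times> bool) list"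
  (* entry for slot s: (kappa(s), A(s), S(s)) = (server scheduled, arrival, service obtained) *)

(* A (behavioural) scheduling policy: given the observation history up to time t-1,
   a distribution over the server scheduled at time t. *)
type_synonym policy = "hist \<Rightarrow> nat pmf"

definition valid_policy :: "nat \<Rightarrow> policy \<Rightarrow> bool" where
  "valid_policy K pol \<longleftrightarrow> (\<forall>h. set_pmf (pol h) \<subseteq> {1..K})"

definition is_best :: "nat \<Rightarrow> (nat \<Rightarrow> real) \<Rightarrow> nat \<Rightarrow> bool" where
  "is_best K mu k \<longleftrightarrow> k \<in> {1..K} \<and> (\<forall>j\<in>{1..K}. j \<noteq> k \<longrightarrow> mu j < mu k)"

definition best :: "nat \<Rightarrow> (nat \<Rightarrow> real) \<Rightarrow> nat" where
  "best K mu = (THE k. is_best K mu k)"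

definition qb_instance :: "nat \<Rightarrow> real \<Rightarrow> (nat \<Rightarrow> real) \<Rightarrow> bool" where
  "qb_instance K lam mu \<longleftrightarrow> 0 \<le> lam \<and> (\<forall>k\<in>{1..K}. 0 \<le> mu k \<and> mu k \<le> 1)
     \<and> (\<exists>k. is_best K mu k) \<and> lam < mu (best K mu)"

definition mu_star :: "nat \<Rightarrow> (nat \<Rightarrow> real) \<Rightarrow> real" where
  "mu_star K mu = mu (best K mu)"

definition gap :: "nat \<Rightarrow> (nat \<Rightarrow> real) \<Rightarrow> real" where
  "gap K mu = mu_star K mu - Max (mu ` ({1..K} - {best K mu}))"

definition mu_min :: "nat \<Rightarrow> (nat \<Rightarrow> real) \<Rightarrow> real" where
  "mu_min K mu = Min (mu ` {1..K})"

(* Bernoulli KL divergence, with the convention 0 log 0 = 0 (automatic in Isabelle since 0 * _ = 0) *)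
definition bern_KL :: "real \<Rightarrow> real \<Rightarrow> real" where
  "bern_KL p q = p * ln (p / q) + (1 - p) * ln ((1 - p) / (1 - q))"

(* D(mu) = Delta / KL(mu_min, (mu^*+1)/2); when (mu^*+1)/2 = 1 the KL divergence is
   +infinity (mu_min < 1 there) and D = 0. *)
definition D_mu :: "nat \<Rightarrow> (nat \<Rightarrow> real) \<Rightarrow> real" where
  "D_mu K mu = (let q = (mu_star K mu + 1) / 2 in
     if q = 1 then 0 else gap K mu / bern_KL (mu_min K mu) q)"

definition queue_step :: "real \<Rightarrow> real \<Rightarrow> nat \<Rightarrow> nat pmf" where
  "queue_step lam m q =
     map_pmf (\<lambda>(a, r). nat (int q + of_bool a - of_bool r))
       (pair_pmf (bernoulli_pmf lam) (bernoulli_pmf m))"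

definition stat_dist :: "real \<Rightarrow> real \<Rightarrow> nat pmf" where
  "stat_dist lam m = (THE p. bind_pmf p (queue_step lam m) = p)"

(* one slot of the coupled system: state = (history, Q, Q^* ) *)
definition sys_step :: "nat \<Rightarrow> real \<Rightarrow> (nat \<Rightarrow> real) \<Rightarrow> policy
     \<Rightarrow> hist \<times> nat \<times> nat \<Rightarrow> (hist \<times> nat \<times> nat) pmf" where
  "sys_step K lam mu pol st =
     (case st of (h, q, qs) \<Rightarrow>
       bind_pmf (bernoulli_pmf lam) (\<lambda>a.
       bind_pmf (Pi_pmf {1..K} False (\<lambda>k. bernoulli_pmf (mu k))) (\<lambda>R.
       bind_pmf (pol h) (\<lambda>\<kappa>.
         return_pmf (h @ [(\<kappa>, a, R \<kappa>)],
                     nat (int q + of_bool a - of_bool (R \<kappa>)),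
                     nat (int qs + of_bool a - of_bool (R (best K mu))))))))"

primrec sys :: "nat \<Rightarrow> real \<Rightarrow> (nat \<Rightarrow> real) \<Rightarrow> policy \<Rightarrow> nat \<Rightarrow> (hist \<times> nat \<times> nat) pmf" where
  "sys K lam mu pol 0 = map_pmf (\<lambda>q. ([], q, q)) (stat_dist lam (mu_star K mu))"
| "sys K lam mu pol (Suc t) = bind_pmf (sys K lam mu pol t) (sys_step K lam mu pol)"

definition queue_regret :: "nat \<Rightarrow> real \<Rightarrow> (nat \<Rightarrow> real) \<Rightarrow> policy \<Rightarrow> nat \<Rightarrow> real" where
  "queue_regret K lam mu pol t =
     measure_pmf.expectation (sys K lam mu pol t) (\<lambda>(h, q, qs). real q - real qs)"

definition exp_pulls :: "nat \<Rightarrow> real \<Rightarrow> (nat \<Rightarrow> real) \<Rightarrow> policy \<Rightarrow> nat \<Rightarrow> nat \<Rightarrow> real" where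
  "exp_pulls K lam mu pol k t =
     measure_pmf.expectation (sys K lam mu pol t)
       (\<lambda>(h, q, qs). real (length (filter (\<lambda>e. fst e = k) h)))"

definition alpha_consistent :: "nat \<Rightarrow> real \<Rightarrow> policy \<Rightarrow> bool" where
  "alpha_consistent K \<alpha> pol \<longleftrightarrow>
     (\<forall>lam mu. qb_instance K lam mu \<longrightarrow>
        (\<forall>k\<in>{1..K}. k \<noteq> best K mu \<longrightarrow>
           (\<lambda>t. exp_pulls K lam mu pol k t) \<in> O(\<lambda>t. real t powr \<alpha>)))"

end

theory Submission
  imports Defs "HOL-Real_Asymp.Real_Asymp"
begin

text \<open>Two estimates of the expected number of slots in which a suboptimal server is scheduled
  are played against each other. The genie queue is stochastically dominated by the queue of
  any policy, and the one-step drift of \<open>Q - Q\<^sup>*\<close> then shows that a slot in which a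
  suboptimal server is scheduled with probability \<open>1 - p(s)\<close> raises the regret by at least
  \<open>lam * gap * (1 - p(s))\<close>. So if \<open>\<Psi>(t)\<close> stayed below the claimed bound from some time on,
  the expected number of suboptimal schedules up to \<open>t\<close> would be at most \<open>O(1) + c ln t\<close> with
  \<open>c = (1 - \<alpha>) (K - 1) / (4 KL)\<close>. On the other hand, boosting a suboptimal server \<open>k\<close> to rate
  \<open>(\<mu>\<^sup>* + 1) / 2\<close> makes it the best one; \<open>\<alpha>\<close>-consistency under both instances and a change of
  measure give \<open>KL(\<mu>\<^sub>k, (\<mu>\<^sup>* + 1) / 2) E[N\<^sub>k(t)] \<ge> (1 - \<alpha>) / 2 ln t - O(1)\<close>, and since the
  divergence only grows when \<open>\<mu>\<^sub>k\<close> is replaced by \<open>\<mu>\<^sub>m\<^sub>i\<^sub>n\<close>, summing over \<open>k\<close> yields twice the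
  previous bound, a contradiction.\<close>

lemma integrable_measure_pmf_bounded:
  fixes f :: "'a \<Rightarrow> real"
  assumes "\<And>x. x \<in> set_pmf M \<Longrightarrow> \<bar>f x\<bar> \<le> B"
  shows "integrable (measure_pmf M) f"
  by (rule measure_pmf.integrable_const_bound[where B=B]) (auto simp: AE_measure_pmf_iff assms)

lemma integrable_measure_pmf_of_bool: "integrable (measure_pmf M) (\<lambda>x. of_bool (P x) :: real)"
  by (rule integrable_measure_pmf_bounded[where B=1]) auto

lemma expectation_of_bool_eq_prob:
  "measure_pmf.expectation M (\<lambda>x. of_bool (P x) :: real) = measure_pmf.prob M {x. P x}"
proof -
  have "(\<lambda>x. of_bool (P x) :: real) = indicator {x. P x}"
    by (auto simp: indicator_def)
  then show ?thesis by simp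
qed

lemma expectation_finite_pmf:
  fixes f :: "'a \<Rightarrow> real"
  assumes "finite (set_pmf M)"
  shows "measure_pmf.expectation M f = (\<Sum>x\<in>set_pmf M. pmf M x * f x)"
  by (subst integral_measure_pmf_real[where A="set_pmf M"]) (auto simp: assms mult.commute)

lemma sum_pmf_mult_of_bool:
  assumes "finite (set_pmf M)"
  shows "(\<Sum>x\<in>set_pmf M. pmf M x * of_bool (x = y)) = pmf M y"
  using assms by (cases "y \<in> set_pmf M") (auto simp: set_pmf_iff)

text \<open>Boundedness is only assumed on the supports, which is why the function is first
  truncated.\<close>

lemma expectation_bind_pmf_bounded:
  fixes f :: "'b \<Rightarrow> real"
  assumes "\<And>x y. x \<in> set_pmf M \<Longrightarrow> y \<in> set_pmf (N x) \<Longrightarrow> \<bar>f y\<bar> \<le> B"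
  shows "measure_pmf.expectation (bind_pmf M N) f =
         measure_pmf.expectation M (\<lambda>x. measure_pmf.expectation (N x) f)"
proof -
  define g where "g y = max (-B) (min B (f y))" for y
  have g_bounded: "\<bar>g y\<bar> \<le> \<bar>B\<bar>" for y
    unfolding g_def by auto
  have f_eq_g: "f y = g y" if "x \<in> set_pmf M" "y \<in> set_pmf (N x)" for x y
    using assms[OF that] by (simp add: g_def abs_le_iff)
  have "measure_pmf.expectation (bind_pmf M N) f = measure_pmf.expectation (bind_pmf M N) g"
    by (intro integral_cong_AE) (auto simp: AE_measure_pmf_iff intro: f_eq_g)
  also have "\<dots> = measure_pmf.expectation M (\<lambda>x. measure_pmf.expectation (N x) g)"
    unfolding measure_pmf_bind
    by (rule integral_bind[where K="count_space UNIV" and B="\<bar>B\<bar>" and B'=1])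
       (auto simp: g_bounded measure_pmf_in_subprob_space measure_pmf.finite_measure_axioms
          measure_pmf.emeasure_space_1)
  also have "\<dots> = measure_pmf.expectation M (\<lambda>x. measure_pmf.expectation (N x) f)"
    by (intro integral_cong_AE) (auto simp: AE_measure_pmf_iff f_eq_g intro!: integral_cong_AE)
  finally show ?thesis .
qed

lemma expectation_cong_triple:
  assumes "\<And>a b c. (a, b, c) \<in> set_pmf M \<Longrightarrow> f (a, b, c) = g (a, b, c)"
  shows "measure_pmf.expectation M f = measure_pmf.expectation M (g :: _ \<Rightarrow> real)"
proof (rule integral_cong_AE)
  show "AE x in measure_pmf M. f x = g x"
    unfolding AE_measure_pmf_iff
  proof
    fix x assume "x \<in> set_pmf M"
    with assms show "f x = g x"
      by (cases x) auto
  qed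
qed auto

lemma prob_tail_tendsto_0: "(\<lambda>N. measure_pmf.prob M {x. N < g x}) \<longlonglongrightarrow> 0"
proof -
  have "(\<lambda>N. measure_pmf.prob M {x. N < g x}) \<longlonglongrightarrow> measure_pmf.prob M (\<Inter>N. {x. N < g x})"
    by (rule measure_pmf.finite_Lim_measure_decseq) (auto simp: decseq_def)
  moreover have "(\<Inter>N. {x. N < (g x :: nat)}) = {}"
    by auto
  ultimately show ?thesis
    by simp
qed

lemma is_best_unique: "is_best K mu k \<Longrightarrow> is_best K mu k' \<Longrightarrow> k = k'"
  unfolding is_best_def by (metis less_asym)

lemma best_eqI: "is_best K mu k \<Longrightarrow> best K mu = k"
  unfolding best_def using is_best_unique by blast

definition num_pulls :: "nat \<Rightarrow> hist \<Rightarrow> real" where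
  "num_pulls k h = real (length (filter (\<lambda>e. fst e = k) h))"

lemma num_pulls_Nil [simp]: "num_pulls k [] = 0"
  by (simp add: num_pulls_def)

lemma num_pulls_snoc [simp]: "num_pulls k (h @ [(\<kappa>, a, s)]) = num_pulls k h + of_bool (\<kappa> = k)"
  by (simp add: num_pulls_def)

lemma num_pulls_nonneg: "0 \<le> num_pulls k h"
  by (simp add: num_pulls_def)

lemma num_pulls_le_length: "num_pulls k h \<le> length h"
  by (simp add: num_pulls_def)

lemma sum_num_pulls:
  "set h \<subseteq> {1..K} \<times> UNIV \<Longrightarrow> (\<Sum>j\<in>{1..K}. num_pulls j h) = real (length h)"
proof (induction h rule: rev_induct)
  case (snoc e h)
  obtain \<kappa> a s where e: "e = (\<kappa>, a, s)"
    by (cases e) auto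
  with snoc show ?case
    by (auto simp: sum.distrib)
qed simp

definition histories :: "nat \<Rightarrow> nat \<Rightarrow> hist set" where
  "histories K t = {h. set h \<subseteq> {1..K} \<times> UNIV \<and> length h = t}"

lemma finite_histories: "finite (histories K t)"
  unfolding histories_def by (rule finite_lists_length_eq) auto

lemma nat_queue_update:
  "nat (int q + of_bool a - of_bool b) = (if a = b then q else if a then q + 1 else q - 1)"
  by (cases a; cases b) auto

definition slot_outcome :: "nat \<Rightarrow> hist \<Rightarrow> nat \<Rightarrow> nat \<Rightarrow> nat \<Rightarrow> bool \<Rightarrow> (nat \<Rightarrow> bool)
    \<Rightarrow> hist \<times> nat \<times> nat" where
  "slot_outcome k0 h q qs \<kappa> a R = (h @ [(\<kappa>, a, R \<kappa>)], nat (int q + of_bool a - of_bool (R \<kappa>)),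
     nat (int qs + of_bool a - of_bool (R k0)))"

locale queue_bandit =
  fixes K :: nat and lam :: real and mu :: "nat \<Rightarrow> real" and pol :: policy
  assumes inst: "qb_instance K lam mu" and valid: "valid_policy K pol"
begin

abbreviation k_star :: nat where "k_star \<equiv> best K mu"

abbreviation services :: "(nat \<Rightarrow> bool) pmf" where
  "services \<equiv> Pi_pmf {1..K} False (\<lambda>k. bernoulli_pmf (mu k))"

abbreviation state :: "nat \<Rightarrow> (hist \<times> nat \<times> nat) pmf" where
  "state t \<equiv> sys K lam mu pol t"

lemma is_best_k_star: "is_best K mu k_star"
  using inst best_eqI unfolding qb_instance_def by metis

lemma k_star_in: "k_star \<in> {1..K}"
  using is_best_k_star unfolding is_best_def by auto

lemma mu_less_k_star: "j \<in> {1..K} \<Longrightarrow> j \<noteq> k_star \<Longrightarrow> mu j < mu k_star"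
  using is_best_k_star unfolding is_best_def by auto

lemma mu_le_k_star: "j \<in> {1..K} \<Longrightarrow> mu j \<le> mu k_star"
  using mu_less_k_star[of j] by (cases "j = k_star") auto

lemma mu_nonneg: "j \<in> {1..K} \<Longrightarrow> 0 \<le> mu j"
  and mu_le_1: "j \<in> {1..K} \<Longrightarrow> mu j \<le> 1"
  using inst unfolding qb_instance_def by auto

lemma lam_nonneg: "0 \<le> lam"
  and lam_less: "lam < mu k_star"
  using inst unfolding qb_instance_def by auto

lemma lam_le_1: "lam \<le> 1"
  using lam_less mu_le_1[OF k_star_in] by auto

lemma policy_in: "\<kappa> \<in> set_pmf (pol h) \<Longrightarrow> \<kappa> \<in> {1..K}"
  using valid unfolding valid_policy_def by blast

lemma finite_policy: "finite (set_pmf (pol h))"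
  using valid finite_subset unfolding valid_policy_def by blast

lemma sum_policy: "(\<Sum>\<kappa>\<in>set_pmf (pol h). pmf (pol h) \<kappa>) = 1"
  by (rule sum_pmf_eq_1) (auto simp: finite_policy)

lemma sum_policy_mult_of_bool: "(\<Sum>\<kappa>\<in>set_pmf (pol h). pmf (pol h) \<kappa> * of_bool (\<kappa> = k)) = pmf (pol h) k"
  by (rule sum_pmf_mult_of_bool[OF finite_policy])

lemma sum_policy_affine:
  "(\<Sum>\<kappa>\<in>set_pmf (pol h). pmf (pol h) \<kappa> * (c + of_bool (\<kappa> = k) * d)) = c + pmf (pol h) k * d"
proof -
  have "(\<Sum>\<kappa>\<in>set_pmf (pol h). pmf (pol h) \<kappa> * (c + of_bool (\<kappa> = k) * d)) =
      c * (\<Sum>\<kappa>\<in>set_pmf (pol h). pmf (pol h) \<kappa>) + d * (\<Sum>\<kappa>\<in>set_pmf (pol h). pmf (pol h) \<kappa> * of_bool (\<kappa> = k))"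
    by (simp add: algebra_simps sum.distrib sum_distrib_left)
  then show ?thesis
    by (simp add: sum_policy sum_policy_mult_of_bool mult.commute)
qed

lemma expectation_services:
  assumes "k \<in> {1..K}"
  shows "measure_pmf.expectation services (\<lambda>R. g (R k)) = mu k * g True + (1 - mu k) * g False"
proof -
  have "measure_pmf.expectation services (\<lambda>R. g (R k)) =
      measure_pmf.expectation (map_pmf (\<lambda>R. R k) services) g"
    by (simp only: integral_map_pmf)
  also have "\<dots> = measure_pmf.expectation (bernoulli_pmf (mu k)) g"
    using assms by (simp only: Pi_pmf_component finite_atLeastAtMost if_True)
  finally show ?thesis
    using assms mu_nonneg mu_le_1 by (simp add: mult.commute)
qed

lemma sys_step_alt:
  "sys_step K lam mu pol (h, q, qs) = bind_pmf (pol h) (\<lambda>\<kappa>. bind_pmf (bernoulli_pmf lam) (\<lambda>a.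
      map_pmf (slot_outcome k_star h q qs \<kappa> a) services))"
  unfolding sys_step_def slot_outcome_def map_pmf_def
  by (simp add: bind_commute_pmf[of "pol h"])

lemma expectation_sys_step:
  fixes f :: "hist \<times> nat \<times> nat \<Rightarrow> real"
  assumes bounded: "\<And>y. y \<in> set_pmf (sys_step K lam mu pol (h, q, qs)) \<Longrightarrow> \<bar>f y\<bar> \<le> B"
  shows "measure_pmf.expectation (sys_step K lam mu pol (h, q, qs)) f =
    (\<Sum>\<kappa>\<in>set_pmf (pol h). pmf (pol h) \<kappa> *
       (lam * measure_pmf.expectation services (\<lambda>R. f (slot_outcome k_star h q qs \<kappa> True R)) +
        (1 - lam) * measure_pmf.expectation services (\<lambda>R. f (slot_outcome k_star h q qs \<kappa> False R))))"
proof -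
  have bnd: "\<bar>f (slot_outcome k_star h q qs \<kappa> a R)\<bar> \<le> B"
    if "\<kappa> \<in> set_pmf (pol h)" "a \<in> set_pmf (bernoulli_pmf lam)" "R \<in> set_pmf services" for \<kappa> a R
    by (rule bounded) (use that in \<open>auto simp: sys_step_alt\<close>)
  let ?N = "\<lambda>\<kappa>. bind_pmf (bernoulli_pmf lam) (\<lambda>a. map_pmf (slot_outcome k_star h q qs \<kappa> a) services)"
  have "measure_pmf.expectation (sys_step K lam mu pol (h, q, qs)) f =
      measure_pmf.expectation (pol h) (\<lambda>\<kappa>. measure_pmf.expectation (?N \<kappa>) f)"
    unfolding sys_step_alt
  proof (rule expectation_bind_pmf_bounded)
    fix \<kappa> y assume "\<kappa> \<in> set_pmf (pol h)" "y \<in> set_pmf (?N \<kappa>)"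
    then show "\<bar>f y\<bar> \<le> B"
      by (auto intro: bnd)
  qed
  also have "\<dots> = (\<Sum>\<kappa>\<in>set_pmf (pol h). pmf (pol h) \<kappa> * measure_pmf.expectation (?N \<kappa>) f)"
    by (rule expectation_finite_pmf[OF finite_policy])
  also have "\<dots> = (\<Sum>\<kappa>\<in>set_pmf (pol h). pmf (pol h) \<kappa> *
       (lam * measure_pmf.expectation services (\<lambda>R. f (slot_outcome k_star h q qs \<kappa> True R)) +
        (1 - lam) * measure_pmf.expectation services (\<lambda>R. f (slot_outcome k_star h q qs \<kappa> False R))))"
  proof (intro sum.cong refl arg_cong2[where f="(*)"])
    fix \<kappa> assume \<kappa>: "\<kappa> \<in> set_pmf (pol h)"
    have "measure_pmf.expectation (?N \<kappa>) f = measure_pmf.expectation (bernoulli_pmf lam)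
        (\<lambda>a. measure_pmf.expectation (map_pmf (slot_outcome k_star h q qs \<kappa> a) services) f)"
    proof (rule expectation_bind_pmf_bounded)
      fix a y assume "a \<in> set_pmf (bernoulli_pmf lam)"
        "y \<in> set_pmf (map_pmf (slot_outcome k_star h q qs \<kappa> a) services)"
      with \<kappa> show "\<bar>f y\<bar> \<le> B"
        by (auto intro: bnd)
    qed
    then show "measure_pmf.expectation (?N \<kappa>) f =
        lam * measure_pmf.expectation services (\<lambda>R. f (slot_outcome k_star h q qs \<kappa> True R)) +
        (1 - lam) * measure_pmf.expectation services (\<lambda>R. f (slot_outcome k_star h q qs \<kappa> False R))"
      using lam_nonneg lam_le_1 by (simp add: mult.commute)
  qed
  finally show ?thesis .
qed

lemma set_pmf_sys_step:
  assumes "y \<in> set_pmf (sys_step K lam mu pol (h, q, qs))"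
  shows "\<exists>\<kappa> a s. \<kappa> \<in> set_pmf (pol h) \<and> fst y = h @ [(\<kappa>, a, s)]"
    and "fst (snd y) \<le> q + 1" and "snd (snd y) \<le> qs + 1"
    and "\<bar>int (fst (snd y)) - int (snd (snd y))\<bar> \<le> \<bar>int q - int qs\<bar> + 1"
  using assms unfolding sys_step_alt slot_outcome_def by (auto simp: nat_queue_update split: if_splits)


lemma set_pmf_state:
  assumes "st \<in> set_pmf (state t)"
  shows "fst st \<in> histories K t" and "\<bar>int (fst (snd st)) - int (snd (snd st))\<bar> \<le> int t"
proof -
  have "fst st \<in> histories K t \<and> \<bar>int (fst (snd st)) - int (snd (snd st))\<bar> \<le> int t"
    using assms
  proof (induction t arbitrary: st)
    case (Suc t)
    then obtain h q qs where prev: "(h, q, qs) \<in> set_pmf (state t)"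
      and st: "st \<in> set_pmf (sys_step K lam mu pol (h, q, qs))"
      by auto
    from Suc.IH[OF prev] have "h \<in> histories K t" "\<bar>int q - int qs\<bar> \<le> int t"
      by auto
    with set_pmf_sys_step[OF st] policy_in show ?case
      unfolding histories_def by fastforce
  qed (auto simp: histories_def)
  then show "fst st \<in> histories K t" and "\<bar>int (fst (snd st)) - int (snd (snd st))\<bar> \<le> int t"
    by auto
qed

lemma length_state: "st \<in> set_pmf (state t) \<Longrightarrow> length (fst st) = t"
  using set_pmf_state(1) unfolding histories_def by blast

lemma abs_queue_diff_state:
  assumes "st \<in> set_pmf (state t)"
  shows "\<bar>real (fst (snd st)) - real (snd (snd st))\<bar> \<le> real t"
  using set_pmf_state(2)[OF assms] by linarith

lemma expectation_state_Suc:
  fixes f :: "hist \<times> nat \<times> nat \<Rightarrow> real"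
  assumes "\<And>st. st \<in> set_pmf (state (Suc t)) \<Longrightarrow> \<bar>f st\<bar> \<le> B"
  shows "measure_pmf.expectation (state (Suc t)) f =
    measure_pmf.expectation (state t) (\<lambda>st. measure_pmf.expectation (sys_step K lam mu pol st) f)"
  unfolding sys.simps
proof (rule expectation_bind_pmf_bounded)
  fix st y
  assume "st \<in> set_pmf (state t)" "y \<in> set_pmf (sys_step K lam mu pol st)"
  then show "\<bar>f y\<bar> \<le> B"
    by (intro assms) auto
qed

lemma expectation_step_queue:
  "measure_pmf.expectation (sys_step K lam mu pol (h, q, qs)) (\<lambda>y. g (fst (snd y))) =
    (\<Sum>\<kappa>\<in>set_pmf (pol h). pmf (pol h) \<kappa> *
       (lam * (mu \<kappa> * g q + (1 - mu \<kappa>) * g (q + 1)) +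
        (1 - lam) * (mu \<kappa> * g (q - 1) + (1 - mu \<kappa>) * g q)))"
proof -
  have bounded: "\<bar>g (fst (snd y))\<bar> \<le> \<bar>g (q - 1)\<bar> + \<bar>g q\<bar> + \<bar>g (q + 1)\<bar>"
    if "y \<in> set_pmf (sys_step K lam mu pol (h, q, qs))" for y
    using that by (auto simp: sys_step_alt slot_outcome_def nat_queue_update)
  have step: "measure_pmf.expectation services (\<lambda>R. g (fst (snd (slot_outcome k_star h q qs \<kappa> a R)))) =
      (if a then mu \<kappa> * g q + (1 - mu \<kappa>) * g (q + 1) else mu \<kappa> * g (q - 1) + (1 - mu \<kappa>) * g q)"
    if "\<kappa> \<in> set_pmf (pol h)" for \<kappa> a
    unfolding slot_outcome_def nat_queue_update snd_conv fst_conv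
    using expectation_services[OF policy_in[OF that], of "\<lambda>b. g (if a = b then q else if a then q + 1 else q - 1)"]
    by (cases a) simp_all
  have "measure_pmf.expectation (sys_step K lam mu pol (h, q, qs)) (\<lambda>y. g (fst (snd y))) =
    (\<Sum>\<kappa>\<in>set_pmf (pol h). pmf (pol h) \<kappa> *
       (lam * measure_pmf.expectation services (\<lambda>R. g (fst (snd (slot_outcome k_star h q qs \<kappa> True R)))) +
        (1 - lam) * measure_pmf.expectation services (\<lambda>R. g (fst (snd (slot_outcome k_star h q qs \<kappa> False R))))))"
    by (rule expectation_sys_step[OF bounded])
  also have "\<dots> = (\<Sum>\<kappa>\<in>set_pmf (pol h). pmf (pol h) \<kappa> *
       (lam * (mu \<kappa> * g q + (1 - mu \<kappa>) * g (q + 1)) +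
        (1 - lam) * (mu \<kappa> * g (q - 1) + (1 - mu \<kappa>) * g q)))"
    by (intro sum.cong refl) (simp only: step if_True if_False)
  finally show ?thesis .
qed

lemma expectation_step_genie_queue:
  "measure_pmf.expectation (sys_step K lam mu pol (h, q, qs)) (\<lambda>y. g (snd (snd y))) =
    lam * (mu k_star * g qs + (1 - mu k_star) * g (qs + 1)) +
    (1 - lam) * (mu k_star * g (qs - 1) + (1 - mu k_star) * g qs)"
proof -
  have bounded: "\<bar>g (snd (snd y))\<bar> \<le> \<bar>g (qs - 1)\<bar> + \<bar>g qs\<bar> + \<bar>g (qs + 1)\<bar>"
    if "y \<in> set_pmf (sys_step K lam mu pol (h, q, qs))" for y
    using that by (auto simp: sys_step_alt slot_outcome_def nat_queue_update)
  have step: "measure_pmf.expectation services (\<lambda>R. g (snd (snd (slot_outcome k_star h q qs \<kappa> a R)))) =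
      (if a then mu k_star * g qs + (1 - mu k_star) * g (qs + 1)
       else mu k_star * g (qs - 1) + (1 - mu k_star) * g qs)" for \<kappa> a
    unfolding slot_outcome_def nat_queue_update snd_conv
    using expectation_services[OF k_star_in, of "\<lambda>b. g (if a = b then qs else if a then qs + 1 else qs - 1)"]
    by (cases a) simp_all
  have "measure_pmf.expectation (sys_step K lam mu pol (h, q, qs)) (\<lambda>y. g (snd (snd y))) =
    (\<Sum>\<kappa>\<in>set_pmf (pol h). pmf (pol h) \<kappa> *
       (lam * measure_pmf.expectation services (\<lambda>R. g (snd (snd (slot_outcome k_star h q qs \<kappa> True R)))) +
        (1 - lam) * measure_pmf.expectation services (\<lambda>R. g (snd (snd (slot_outcome k_star h q qs \<kappa> False R))))))"
    by (rule expectation_sys_step[OF bounded])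
  then show ?thesis
    by (simp only: step if_True if_False sum_policy flip: sum_distrib_right) simp
qed

lemma expectation_step_history:
  "measure_pmf.expectation (sys_step K lam mu pol (h, q, qs)) (\<lambda>y. g (fst y)) =
    (\<Sum>\<kappa>\<in>set_pmf (pol h). pmf (pol h) \<kappa> *
       (lam * (mu \<kappa> * g (h @ [(\<kappa>, True, True)]) + (1 - mu \<kappa>) * g (h @ [(\<kappa>, True, False)])) +
        (1 - lam) * (mu \<kappa> * g (h @ [(\<kappa>, False, True)]) + (1 - mu \<kappa>) * g (h @ [(\<kappa>, False, False)]))))"
proof -
  let ?B = "\<Sum>\<kappa>\<in>set_pmf (pol h). \<Sum>a\<in>UNIV. \<Sum>s\<in>UNIV. \<bar>g (h @ [(\<kappa>, a, s)])\<bar>"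
  have entry_bounded: "\<bar>g (h @ [(\<kappa>, a, s)])\<bar> \<le> ?B" if "\<kappa> \<in> set_pmf (pol h)" for \<kappa> a s
  proof -
    have "\<bar>g (h @ [(\<kappa>, a, s)])\<bar> \<le> (\<Sum>s\<in>UNIV. \<bar>g (h @ [(\<kappa>, a, s)])\<bar>)"
      by (rule member_le_sum) auto
    also have "\<dots> \<le> (\<Sum>a\<in>UNIV. \<Sum>s\<in>UNIV. \<bar>g (h @ [(\<kappa>, a, s)])\<bar>)"
      by (rule member_le_sum[where f="\<lambda>a. \<Sum>s\<in>UNIV. \<bar>g (h @ [(\<kappa>, a, s)])\<bar>"])
         (auto intro: sum_nonneg)
    also have "\<dots> \<le> ?B"
      by (rule member_le_sum[where f="\<lambda>\<kappa>. \<Sum>a\<in>UNIV. \<Sum>s\<in>UNIV. \<bar>g (h @ [(\<kappa>, a, s)])\<bar>"])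
         (auto intro: sum_nonneg that finite_policy)
    finally show ?thesis .
  qed
  then have bounded: "\<bar>g (fst y)\<bar> \<le> ?B" if "y \<in> set_pmf (sys_step K lam mu pol (h, q, qs))" for y
    using that by (auto simp: sys_step_alt slot_outcome_def)
  have step: "measure_pmf.expectation services (\<lambda>R. g (fst (slot_outcome k_star h q qs \<kappa> a R))) =
      mu \<kappa> * g (h @ [(\<kappa>, a, True)]) + (1 - mu \<kappa>) * g (h @ [(\<kappa>, a, False)])"
    if "\<kappa> \<in> set_pmf (pol h)" for \<kappa> a
    unfolding slot_outcome_def fst_conv
    using expectation_services[OF policy_in[OF that], of "\<lambda>b. g (h @ [(\<kappa>, a, b)])"] .
  have "measure_pmf.expectation (sys_step K lam mu pol (h, q, qs)) (\<lambda>y. g (fst y)) =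
    (\<Sum>\<kappa>\<in>set_pmf (pol h). pmf (pol h) \<kappa> *
       (lam * measure_pmf.expectation services (\<lambda>R. g (fst (slot_outcome k_star h q qs \<kappa> True R))) +
        (1 - lam) * measure_pmf.expectation services (\<lambda>R. g (fst (slot_outcome k_star h q qs \<kappa> False R)))))"
    by (rule expectation_sys_step[OF bounded])
  also have "\<dots> = (\<Sum>\<kappa>\<in>set_pmf (pol h). pmf (pol h) \<kappa> *
       (lam * (mu \<kappa> * g (h @ [(\<kappa>, True, True)]) + (1 - mu \<kappa>) * g (h @ [(\<kappa>, True, False)])) +
        (1 - lam) * (mu \<kappa> * g (h @ [(\<kappa>, False, True)]) + (1 - mu \<kappa>) * g (h @ [(\<kappa>, False, False)]))))"
    by (intro sum.cong refl) (simp only: step if_True if_False)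
  finally show ?thesis .
qed

end

section \<open>Stochastic dominance of the genie queue\<close>

text \<open>\<open>tail_step lam m n x\<close> is the probability that a Bernoulli queue of length \<open>x\<close> with arrival
  rate \<open>lam\<close> and service rate \<open>m\<close> has length at least \<open>n\<close> after one slot; the truncated
  subtraction \<open>x - 1\<close> matches \<open>(x + A - R)\<^sup>+\<close> at \<open>x = 0\<close>.\<close>

definition tail_step :: "real \<Rightarrow> real \<Rightarrow> nat \<Rightarrow> nat \<Rightarrow> real" where
  "tail_step lam m n x = lam * (m * of_bool (n \<le> x) + (1 - m) * of_bool (n \<le> x + 1)) +
     (1 - lam) * (m * of_bool (n \<le> x - 1) + (1 - m) * of_bool (n \<le> x))"

lemma tail_step_0 [simp]: "tail_step lam m 0 x = 1"
  by (simp add: tail_step_def algebra_simps)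

lemma tail_step_Suc:
  "tail_step lam m (Suc n) x = lam * (1 - m) * of_bool (n \<le> x) +
     (lam * m + (1 - lam) * (1 - m)) * of_bool (Suc n \<le> x) + (1 - lam) * m * of_bool (Suc (Suc n) \<le> x)"
proof -
  have "(Suc n \<le> x + 1) = (n \<le> x)" "(Suc n \<le> x - 1) = (Suc (Suc n) \<le> x)"
    by arith+
  then show ?thesis
    unfolding tail_step_def by (simp add: algebra_simps)
qed

lemma tail_step_antimono:
  assumes "0 \<le> lam" "lam \<le> 1" "m \<le> m'"
  shows "tail_step lam m' n x \<le> tail_step lam m n x"
proof -
  have "tail_step lam m n x - tail_step lam m' n x = (m' - m) *
      (lam * (of_bool (n \<le> x + 1) - of_bool (n \<le> x)) + (1 - lam) * (of_bool (n \<le> x) - of_bool (n \<le> x - 1)))"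
    unfolding tail_step_def by (simp add: algebra_simps)
  also have "\<dots> \<ge> 0"
    using assms by (intro mult_nonneg_nonneg add_nonneg_nonneg) auto
  finally show ?thesis
    by simp
qed

lemma tail_step_nonneg: "0 \<le> lam \<Longrightarrow> lam \<le> 1 \<Longrightarrow> 0 \<le> m \<Longrightarrow> m \<le> 1 \<Longrightarrow> 0 \<le> tail_step lam m n x"
  unfolding tail_step_def by (intro add_nonneg_nonneg mult_nonneg_nonneg) auto

lemma tail_step_le_1:
  assumes "0 \<le> lam" "lam \<le> 1" "0 \<le> m" "m \<le> 1"
  shows "tail_step lam m n x \<le> 1"
proof -
  have "tail_step lam m n x \<le> lam * (m + (1 - m)) + (1 - lam) * (m + (1 - m))"
    unfolding tail_step_def using assms by (intro add_mono mult_left_mono) (auto intro: mult_left_le)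
  then show ?thesis
    by simp
qed

lemma expectation_tail_step_Suc:
  "measure_pmf.expectation M (\<lambda>y. tail_step lam m (Suc n) (g y)) =
     lam * (1 - m) * measure_pmf.expectation M (\<lambda>y. of_bool (n \<le> g y)) +
     (lam * m + (1 - lam) * (1 - m)) * measure_pmf.expectation M (\<lambda>y. of_bool (Suc n \<le> g y)) +
     (1 - lam) * m * measure_pmf.expectation M (\<lambda>y. of_bool (Suc (Suc n) \<le> g y))"
  unfolding tail_step_Suc by (simp add: integrable_measure_pmf_of_bool)

text \<open>With \<open>c = (1 - lam) \<mu>\<^sup>*\<close>, the idle-slot term is what the one-step drift of \<open>Q - Q\<^sup>*\<close>
  produces.\<close>

definition queue_excess :: "real \<Rightarrow> nat \<Rightarrow> nat \<Rightarrow> real" where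
  "queue_excess c q qs = real q - real qs + c * (of_bool (q = 0) - of_bool (qs = 0))"

lemma abs_queue_excess_le:
  "0 \<le> c \<Longrightarrow> c \<le> 1 \<Longrightarrow> \<bar>queue_excess c q qs\<bar> \<le> \<bar>real q - real qs\<bar> + 2"
  unfolding queue_excess_def by (auto simp: of_bool_def)

lemma real_min_eq_sum_of_bool: "real (min q N) = (\<Sum>n\<in>{1..N}. of_bool (n \<le> q))"
  by (induction N) (auto simp: min_def)

lemma min_diff_le_diff:
  assumes "\<bar>int q - int qs\<bar> \<le> int t"
  shows "real (min q N) - real (min qs N) - real t * of_bool (N < qs) \<le> real q - real qs"
  using assms by (cases "N < qs"; cases "q \<le> N") (auto simp: min_def)

context queue_bandit
begin

definition queue_tail :: "nat \<Rightarrow> nat \<Rightarrow> real" where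
  "queue_tail t n = measure_pmf.expectation (state t) (\<lambda>st. of_bool (n \<le> fst (snd st)))"

definition genie_tail :: "nat \<Rightarrow> nat \<Rightarrow> real" where
  "genie_tail t n = measure_pmf.expectation (state t) (\<lambda>st. of_bool (n \<le> snd (snd st)))"

definition policy_tail_step :: "hist \<Rightarrow> nat \<Rightarrow> nat \<Rightarrow> real" where
  "policy_tail_step h n x = (\<Sum>\<kappa>\<in>set_pmf (pol h). pmf (pol h) \<kappa> * tail_step lam (mu \<kappa>) n x)"

lemma tail_step_k_star_le_policy_tail_step: "tail_step lam (mu k_star) n x \<le> policy_tail_step h n x"
proof -
  have "tail_step lam (mu k_star) n x = (\<Sum>\<kappa>\<in>set_pmf (pol h). pmf (pol h) \<kappa> * tail_step lam (mu k_star) n x)"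
    by (simp add: sum_policy flip: sum_distrib_right)
  also have "\<dots> \<le> policy_tail_step h n x"
    unfolding policy_tail_step_def
    by (intro sum_mono mult_left_mono tail_step_antimono mu_le_k_star policy_in lam_nonneg lam_le_1) auto
  finally show ?thesis .
qed

lemma abs_policy_tail_step_le_1: "\<bar>policy_tail_step h n x\<bar> \<le> 1"
proof -
  have "0 \<le> policy_tail_step h n x"
    unfolding policy_tail_step_def
    by (intro sum_nonneg mult_nonneg_nonneg tail_step_nonneg lam_nonneg lam_le_1 mu_nonneg mu_le_1 policy_in)
      auto
  moreover have "policy_tail_step h n x \<le> (\<Sum>\<kappa>\<in>set_pmf (pol h). pmf (pol h) \<kappa> * 1)"
    unfolding policy_tail_step_def
    by (intro sum_mono mult_left_mono tail_step_le_1 lam_nonneg lam_le_1 mu_nonneg mu_le_1 policy_in) auto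
  ultimately show ?thesis
    by (simp add: sum_policy)
qed

lemma queue_tail_Suc:
  "queue_tail (Suc t) n = measure_pmf.expectation (state t) (\<lambda>st. policy_tail_step (fst st) n (fst (snd st)))"
proof -
  have "queue_tail (Suc t) n = measure_pmf.expectation (state t)
      (\<lambda>st. measure_pmf.expectation (sys_step K lam mu pol st) (\<lambda>y. of_bool (n \<le> fst (snd y))))"
    unfolding queue_tail_def by (rule expectation_state_Suc[where B=1]) simp
  also have "\<dots> = measure_pmf.expectation (state t) (\<lambda>st. policy_tail_step (fst st) n (fst (snd st)))"
    by (rule expectation_cong_triple)
      (simp only: expectation_step_queue[of _ _ _ "\<lambda>x. of_bool (n \<le> x)"] policy_tail_step_def
        tail_step_def fst_conv snd_conv)
  finally show ?thesis .
qed

lemma genie_tail_Suc: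
  "genie_tail (Suc t) n = measure_pmf.expectation (state t) (\<lambda>st. tail_step lam (mu k_star) n (snd (snd st)))"
proof -
  have "genie_tail (Suc t) n = measure_pmf.expectation (state t)
      (\<lambda>st. measure_pmf.expectation (sys_step K lam mu pol st) (\<lambda>y. of_bool (n \<le> snd (snd y))))"
    unfolding genie_tail_def by (rule expectation_state_Suc[where B=1]) simp
  also have "\<dots> = measure_pmf.expectation (state t) (\<lambda>st. tail_step lam (mu k_star) n (snd (snd st)))"
    by (rule expectation_cong_triple)
      (simp only: expectation_step_genie_queue[of _ _ _ "\<lambda>x. of_bool (n \<le> x)"] tail_step_def snd_conv)
  finally show ?thesis .
qed

text \<open>The induction works because \<open>tail_step\<close> is antitone in the service rate and, for a fixed
  rate, a nonnegative combination of tail indicators.\<close>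

lemma genie_tail_le_queue_tail: "genie_tail t n \<le> queue_tail t n"
proof (induction t arbitrary: n)
  case 0
  show ?case
    by (simp add: genie_tail_def queue_tail_def)
next
  case (Suc t)
  have "measure_pmf.expectation (state t) (\<lambda>st. tail_step lam (mu k_star) n (snd (snd st))) \<le>
      measure_pmf.expectation (state t) (\<lambda>st. tail_step lam (mu k_star) n (fst (snd st)))"
  proof (cases n)
    case (Suc n')
    have "0 \<le> mu k_star" "mu k_star \<le> 1"
      using mu_nonneg mu_le_1 k_star_in by auto
    then show ?thesis
      unfolding Suc expectation_tail_step_Suc
      using Suc.IH[unfolded genie_tail_def queue_tail_def] lam_nonneg lam_le_1
      by (intro add_mono mult_left_mono) auto
  qed simp
  also have "\<dots> \<le> measure_pmf.expectation (state t) (\<lambda>st. policy_tail_step (fst st) n (fst (snd st)))"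
    using lam_nonneg lam_le_1 mu_nonneg[OF k_star_in] mu_le_1[OF k_star_in]
    by (intro integral_mono integrable_measure_pmf_bounded[where B=1] abs_policy_tail_step_le_1
        tail_step_k_star_le_policy_tail_step)
      (auto simp: tail_step_nonneg tail_step_le_1 abs_le_iff intro: order.trans[OF _ tail_step_nonneg])
  finally show ?case
    unfolding genie_tail_Suc queue_tail_Suc .
qed

text \<open>This is where the stochastic dominance enters: truncating both queues at level \<open>N\<close>
  turns the expectation into a sum of tail differences, and the truncation error vanishes
  as \<open>N \<rightarrow> \<infinity>\<close>.\<close>

lemma expectation_queue_excess_truncated:
  assumes "0 \<le> c" "c \<le> 1" "1 \<le> N"
  shows "0 \<le> measure_pmf.expectation (state t) (\<lambda>st. queue_excess c (fst (snd st)) (snd (snd st))) +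
    real t * measure_pmf.prob (state t) {st. N < snd (snd st)}" (is "0 \<le> ?E + real t * ?P")
proof -
  let ?Y = "\<lambda>st. (\<Sum>n\<in>{1..N}. of_bool (n \<le> fst (snd st)) - of_bool (n \<le> snd (snd st))) -
    c * (of_bool (1 \<le> fst (snd st)) - of_bool (1 \<le> snd (snd st)))"
  have tails: "0 \<le> queue_tail t n - genie_tail t n" for n
    using genie_tail_le_queue_tail[of t n] by simp
  have "c * (queue_tail t 1 - genie_tail t 1) \<le> queue_tail t 1 - genie_tail t 1"
    using assms tails[of 1] by (simp add: mult_left_le_one_le)
  also have "\<dots> \<le> (\<Sum>n\<in>{1..N}. queue_tail t n - genie_tail t n)"
    by (rule member_le_sum) (use assms(3) tails in auto)
  also have "\<dots> - c * (queue_tail t 1 - genie_tail t 1) = measure_pmf.expectation (state t) ?Y"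
    unfolding queue_tail_def genie_tail_def
    by (simp add: integrable_measure_pmf_of_bool Bochner_Integration.integral_sum)
  finally have "0 \<le> measure_pmf.expectation (state t) ?Y"
    by simp
  also have "\<dots> - real t * ?P =
      measure_pmf.expectation (state t) (\<lambda>st. ?Y st - real t * of_bool (N < snd (snd st)))"
    by (simp add: integrable_measure_pmf_of_bool expectation_of_bool_eq_prob)
  also have "\<dots> \<le> ?E"
  proof (rule integral_mono_AE)
    show "integrable (measure_pmf (state t)) (\<lambda>st. ?Y st - real t * of_bool (N < snd (snd st)))"
      by (simp add: integrable_measure_pmf_of_bool)
    show "integrable (measure_pmf (state t)) (\<lambda>st. queue_excess c (fst (snd st)) (snd (snd st)))"
      using assms abs_queue_excess_le abs_queue_diff_state
      by (intro integrable_measure_pmf_bounded[where B="real t + 2"]) (fastforce intro: order.trans)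
    show "AE st in measure_pmf (state t).
        ?Y st - real t * of_bool (N < snd (snd st)) \<le> queue_excess c (fst (snd st)) (snd (snd st))"
      unfolding AE_measure_pmf_iff
    proof
      fix st assume "st \<in> set_pmf (state t)"
      note diff = min_diff_le_diff[OF set_pmf_state(2)[OF this], of N]
      have "(\<Sum>n\<in>{1..N}. of_bool (n \<le> fst (snd st)) - of_bool (n \<le> snd (snd st)) :: real) =
          real (min (fst (snd st)) N) - real (min (snd (snd st)) N)"
        by (simp add: real_min_eq_sum_of_bool sum_subtractf)
      moreover have "- c * (of_bool (1 \<le> fst (snd st)) - of_bool (1 \<le> snd (snd st))) =
          c * (of_bool (fst (snd st) = 0) - of_bool (snd (snd st) = 0))"
        by (cases "fst (snd st) = 0"; cases "snd (snd st) = 0") simp_all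
      ultimately show
        "?Y st - real t * of_bool (N < snd (snd st)) \<le> queue_excess c (fst (snd st)) (snd (snd st))"
        using diff unfolding queue_excess_def by linarith
    qed
  qed
  finally show ?thesis
    by simp
qed

lemma expectation_queue_excess_nonneg:
  assumes "0 \<le> c" "c \<le> 1"
  shows "0 \<le> measure_pmf.expectation (state t) (\<lambda>st. queue_excess c (fst (snd st)) (snd (snd st)))"
    (is "0 \<le> ?E")
proof -
  let ?P = "\<lambda>N. measure_pmf.prob (state t) {st. N < snd (snd st)}"
  have "(\<lambda>N. ?E + real t * ?P N) \<longlonglongrightarrow> ?E + real t * 0"
    by (intro tendsto_intros prob_tail_tendsto_0)
  then show ?thesis
    using LIMSEQ_le_const[of "\<lambda>N. ?E + real t * ?P N" ?E 0] expectation_queue_excess_truncated[OF assms]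
    by (auto intro: exI[of _ 1])
qed

lemma queue_regret_nonneg: "0 \<le> queue_regret K lam mu pol t"
  using expectation_queue_excess_nonneg[of 0 t]
  by (simp add: queue_regret_def queue_excess_def case_prod_unfold)

section \<open>Scheduling probabilities and the drift of the queue-regret\<close>

definition sched_prob :: "nat \<Rightarrow> nat \<Rightarrow> real" where
  "sched_prob k t = measure_pmf.expectation (state t) (\<lambda>st. pmf (pol (fst st)) k)"

lemma integrable_policy_pmf: "integrable (measure_pmf M) (\<lambda>st. pmf (pol (f st)) k)"
  by (rule integrable_measure_pmf_bounded[where B=1]) (simp add: pmf_le_1)

lemma sched_prob_nonneg: "0 \<le> sched_prob k t"
  unfolding sched_prob_def by simp

lemma sum_sched_prob: "(\<Sum>k\<in>{1..K}. sched_prob k t) = 1"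
proof -
  have "(\<Sum>k\<in>{1..K}. sched_prob k t) =
      measure_pmf.expectation (state t) (\<lambda>st. \<Sum>k\<in>{1..K}. pmf (pol (fst st)) k)"
    unfolding sched_prob_def by (simp add: integrable_policy_pmf Bochner_Integration.integral_sum)
  also have "\<dots> = measure_pmf.expectation (state t) (\<lambda>_. 1)"
    by (intro Bochner_Integration.integral_cong refl sum_pmf_eq_1) (auto dest: policy_in)
  finally show ?thesis
    by simp
qed

lemma exp_pulls_eq_expectation:
  "exp_pulls K lam mu pol k t = measure_pmf.expectation (state t) (\<lambda>st. num_pulls k (fst st))"
  unfolding exp_pulls_def num_pulls_def by (simp add: case_prod_unfold)

lemma exp_pulls_Suc: "exp_pulls K lam mu pol k (Suc t) = exp_pulls K lam mu pol k t + sched_prob k t"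
proof -
  have bounded: "\<bar>num_pulls k (fst st)\<bar> \<le> real t" if "st \<in> set_pmf (state t)" for st t
    using num_pulls_nonneg[of k "fst st"] num_pulls_le_length[of k "fst st"] length_state[OF that]
    by simp
  have step: "measure_pmf.expectation (sys_step K lam mu pol (h, q, qs)) (\<lambda>y. num_pulls k (fst y)) =
      num_pulls k h + pmf (pol h) k" for h q qs
  proof -
    have "lam * (mu \<kappa> * x + (1 - mu \<kappa>) * x) + (1 - lam) * (mu \<kappa> * x + (1 - mu \<kappa>) * x) = x"
      for \<kappa> and x :: real
      by (simp add: algebra_simps)
    then show ?thesis
      using sum_policy_affine[of h "num_pulls k h" k 1]
      unfolding expectation_step_history[of h q qs "num_pulls k"] num_pulls_snoc by simp
  qed
  have "exp_pulls K lam mu pol k (Suc t) =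
      measure_pmf.expectation (state t) (\<lambda>st. measure_pmf.expectation (sys_step K lam mu pol st)
        (\<lambda>y. num_pulls k (fst y)))"
    unfolding exp_pulls_eq_expectation by (rule expectation_state_Suc[where B="Suc t"]) (rule bounded)
  also have "\<dots> = measure_pmf.expectation (state t) (\<lambda>st. num_pulls k (fst st) + pmf (pol (fst st)) k)"
    by (rule expectation_cong_triple) (simp only: step fst_conv)
  also have "\<dots> = exp_pulls K lam mu pol k t + sched_prob k t"
    unfolding exp_pulls_eq_expectation sched_prob_def
    by (intro Bochner_Integration.integral_add integrable_policy_pmf
        integrable_measure_pmf_bounded[where B=t] bounded)
  finally show ?thesis .
qed

lemma exp_pulls_eq_sum: "exp_pulls K lam mu pol k t = (\<Sum>s<t. sched_prob k s)"
proof (induction t)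
  case 0
  show ?case
    by (simp add: exp_pulls_eq_expectation)
next
  case (Suc t)
  then show ?case
    by (simp add: exp_pulls_Suc)
qed

lemma exp_pulls_nonneg: "0 \<le> exp_pulls K lam mu pol k t"
  unfolding exp_pulls_eq_sum by (intro sum_nonneg sched_prob_nonneg)

lemma sum_exp_pulls_suboptimal:
  "(\<Sum>k\<in>{1..K} - {k_star}. exp_pulls K lam mu pol k t) = (\<Sum>s<t. 1 - sched_prob k_star s)"
proof -
  have "(\<Sum>k\<in>{1..K} - {k_star}. sched_prob k s) = 1 - sched_prob k_star s" for s
    using sum_sched_prob[of s] k_star_in by (simp add: sum.remove)
  then show ?thesis
    unfolding exp_pulls_eq_sum by (subst sum.swap) simp
qed

definition mean_service :: "hist \<Rightarrow> real" where
  "mean_service h = (\<Sum>\<kappa>\<in>set_pmf (pol h). pmf (pol h) \<kappa> * mu \<kappa>)"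

lemma mean_service_nonneg: "0 \<le> mean_service h"
  unfolding mean_service_def by (intro sum_nonneg mult_nonneg_nonneg mu_nonneg policy_in) auto

lemma mean_service_le: "mean_service h \<le> mu k_star"
proof -
  have "mean_service h \<le> (\<Sum>\<kappa>\<in>set_pmf (pol h). pmf (pol h) \<kappa> * mu k_star)"
    unfolding mean_service_def by (intro sum_mono mult_left_mono mu_le_k_star policy_in) auto
  then show ?thesis
    by (simp add: sum_policy flip: sum_distrib_right)
qed

lemma gap_le_mu_diff: "\<kappa> \<in> {1..K} \<Longrightarrow> \<kappa> \<noteq> k_star \<Longrightarrow> gap K mu \<le> mu k_star - mu \<kappa>"
  unfolding gap_def mu_star_def by (auto intro!: Max_ge)

lemma gap_pos: "2 \<le> K \<Longrightarrow> 0 < gap K mu"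
proof -
  assume K: "2 \<le> K"
  obtain j where j: "j \<in> {1..K} - {k_star}"
  proof (cases "k_star = 1")
    case True
    with K that[of 2] show thesis
      by auto
  next
    case False
    with K that[of 1] show thesis
      by auto
  qed
  then have "Max (mu ` ({1..K} - {k_star})) \<in> mu ` ({1..K} - {k_star})"
    by (intro Max_in) auto
  with mu_less_k_star show ?thesis
    unfolding gap_def mu_star_def by fastforce
qed

lemma gap_mult_le_mean_service_deficit: "gap K mu * (1 - pmf (pol h) k_star) \<le> mu k_star - mean_service h"
proof -
  have "gap K mu * (1 - pmf (pol h) k_star) =
      (\<Sum>\<kappa>\<in>set_pmf (pol h). pmf (pol h) \<kappa> * (gap K mu * (1 - of_bool (\<kappa> = k_star))))"
    by (simp add: algebra_simps sum_subtractf sum_policy sum_policy_mult_of_bool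
        flip: sum_distrib_right sum_distrib_left)
  also have "\<dots> \<le> (\<Sum>\<kappa>\<in>set_pmf (pol h). pmf (pol h) \<kappa> * (mu k_star - mu \<kappa>))"
    using gap_le_mu_diff policy_in by (intro sum_mono mult_left_mono) auto
  also have "\<dots> = mu k_star - mean_service h"
    unfolding mean_service_def by (simp add: algebra_simps sum_subtractf sum_policy flip: sum_distrib_right)
  finally show ?thesis .
qed

lemma expectation_step_queue_diff:
  "measure_pmf.expectation (sys_step K lam mu pol (h, q, qs)) (\<lambda>y. real (fst (snd y)) - real (snd (snd y))) =
     queue_excess ((1 - lam) * mu k_star) q qs +
     (mu k_star - mean_service h) * (1 - (1 - lam) * of_bool (q = 0))"
proof -
  have step: "lam * (m * real x + (1 - m) * real (x + 1)) + (1 - lam) * (m * real (x - 1) + (1 - m) * real x)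
      = (real x + lam) + ((1 - lam) * of_bool (x = 0) - 1) * m" for m x
    by (cases "x = 0") (auto simp: algebra_simps of_nat_diff)
  have average: "(\<Sum>\<kappa>\<in>set_pmf (pol h). pmf (pol h) \<kappa> * (a + b * mu \<kappa>)) = a + b * mean_service h"
    for a b
    unfolding mean_service_def
    by (simp add: algebra_simps sum.distrib sum_policy flip: sum_distrib_left sum_distrib_right)
  have "measure_pmf.expectation (sys_step K lam mu pol (h, q, qs)) (\<lambda>y. real (fst (snd y))) =
      (real q + lam) + ((1 - lam) * of_bool (q = 0) - 1) * mean_service h"
    unfolding expectation_step_queue[of h q qs real] step average ..
  moreover have "measure_pmf.expectation (sys_step K lam mu pol (h, q, qs)) (\<lambda>y. real (snd (snd y))) =
      (real qs + lam) + ((1 - lam) * of_bool (qs = 0) - 1) * mu k_star"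
    unfolding expectation_step_genie_queue[of h q qs real] step ..
  moreover have "integrable (measure_pmf (sys_step K lam mu pol (h, q, qs))) (\<lambda>y. real (fst (snd y)))"
    by (rule integrable_measure_pmf_bounded[where B="q + 1"]) (auto dest: set_pmf_sys_step(2))
  moreover have "integrable (measure_pmf (sys_step K lam mu pol (h, q, qs))) (\<lambda>y. real (snd (snd y)))"
    by (rule integrable_measure_pmf_bounded[where B="qs + 1"]) (auto dest: set_pmf_sys_step(3))
  ultimately show ?thesis
    by (simp add: queue_excess_def algebra_simps)
qed

text \<open>The drift identity: besides the excess, whose expectation is nonnegative, every slot
  in which a suboptimal server is scheduled adds at least \<open>lam * gap\<close> to the regret.\<close>

lemma queue_regret_Suc_ge: "lam * gap K mu * (1 - sched_prob k_star t) \<le> queue_regret K lam mu pol (Suc t)"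
proof -
  let ?c = "(1 - lam) * mu k_star"
  let ?X = "\<lambda>st. queue_excess ?c (fst (snd st)) (snd (snd st))"
  let ?D = "\<lambda>st. (mu k_star - mean_service (fst st)) * (1 - (1 - lam) * of_bool (fst (snd st) = 0))"
  have c: "0 \<le> ?c" "?c \<le> 1"
    using lam_nonneg lam_le_1 mu_nonneg[OF k_star_in] mu_le_1[OF k_star_in] by (auto intro: mult_le_one)
  have deficit: "0 \<le> mu k_star - mean_service h" "mu k_star - mean_service h \<le> 1" for h
    using mean_service_le[of h] mean_service_nonneg[of h] mu_le_1[OF k_star_in] by auto
  have int_X: "integrable (measure_pmf (state t)) ?X"
    using c abs_queue_excess_le abs_queue_diff_state
    by (intro integrable_measure_pmf_bounded[where B="real t + 2"]) (fastforce intro: order.trans)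
  have int_D: "integrable (measure_pmf (state t)) ?D"
    using deficit lam_nonneg lam_le_1
    by (intro integrable_measure_pmf_bounded[where B=1]) (auto simp: abs_mult intro!: mult_le_one)
  have "lam * gap K mu * (1 - sched_prob k_star t) =
      measure_pmf.expectation (state t) (\<lambda>st. lam * (gap K mu * (1 - pmf (pol (fst st)) k_star)))"
    unfolding sched_prob_def by (simp add: integrable_policy_pmf algebra_simps)
  also have "\<dots> \<le> measure_pmf.expectation (state t) ?D"
  proof (intro integral_mono int_D)
    show "integrable (measure_pmf (state t)) (\<lambda>st. lam * (gap K mu * (1 - pmf (pol (fst st)) k_star)))"
      by (simp add: integrable_policy_pmf)
    fix st :: "hist \<times> nat \<times> nat"
    have "lam * (gap K mu * (1 - pmf (pol (fst st)) k_star)) \<le> lam * (mu k_star - mean_service (fst st))"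
      by (intro mult_left_mono gap_mult_le_mean_service_deficit lam_nonneg)
    also have "\<dots> \<le> ?D st"
    proof -
      have "lam \<le> 1 - (1 - lam) * of_bool (fst (snd st) = 0)"
        using lam_le_1 by simp
      from mult_left_mono[OF this deficit(1)] show ?thesis
        by (simp add: mult.commute)
    qed
    finally show "lam * (gap K mu * (1 - pmf (pol (fst st)) k_star)) \<le> ?D st" .
  qed
  also have "\<dots> \<le> measure_pmf.expectation (state t) ?X + measure_pmf.expectation (state t) ?D"
    using expectation_queue_excess_nonneg[OF c] by simp
  also have "\<dots> = measure_pmf.expectation (state t) (\<lambda>st. measure_pmf.expectation
      (sys_step K lam mu pol st) (\<lambda>y. real (fst (snd y)) - real (snd (snd y))))"
    by (simp add: int_X int_D flip: Bochner_Integration.integral_add)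
      (rule expectation_cong_triple, simp add: expectation_step_queue_diff)
  also have "\<dots> = queue_regret K lam mu pol (Suc t)"
    unfolding queue_regret_def case_prod_unfold
    by (rule expectation_state_Suc[symmetric, where B="Suc t"]) (use abs_queue_diff_state in blast)
  finally show ?thesis .
qed


definition hist_law :: "nat \<Rightarrow> hist pmf" where
  "hist_law t = map_pmf fst (state t)"

definition slot_prob :: "nat \<Rightarrow> bool \<Rightarrow> bool \<Rightarrow> real" where
  "slot_prob \<kappa> a s = (if a then lam else 1 - lam) * (if s then mu \<kappa> else 1 - mu \<kappa>)"

lemma set_pmf_hist_law: "set_pmf (hist_law t) \<subseteq> histories K t"
  unfolding hist_law_def using set_pmf_state(1) by auto

lemma sum_pmf_hist_law: "(\<Sum>h\<in>histories K t. pmf (hist_law t) h) = 1"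
  by (rule sum_pmf_eq_1) (use set_pmf_hist_law finite_histories in auto)

lemma expectation_state_history:
  "measure_pmf.expectation (state t) (\<lambda>st. f (fst st)) = (\<Sum>h\<in>histories K t. pmf (hist_law t) h * f h)"
proof -
  have "measure_pmf.expectation (state t) (\<lambda>st. f (fst st)) = measure_pmf.expectation (hist_law t) f"
    by (simp add: hist_law_def)
  also have "\<dots> = (\<Sum>h\<in>histories K t. f h * pmf (hist_law t) h)"
    by (rule integral_measure_pmf_real) (use set_pmf_hist_law finite_histories in auto)
  finally show ?thesis
    by (simp add: mult.commute)
qed

lemma pmf_hist_law_0: "pmf (hist_law 0) h = of_bool (h = [])"
  by (simp add: hist_law_def pmf.map_comp o_def)

lemma pmf_hist_law_Nil_Suc: "pmf (hist_law (Suc t)) [] = 0"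
  using set_pmf_hist_law[of "Suc t"] by (auto simp: histories_def set_pmf_iff)

lemma pmf_hist_law_snoc:
  "pmf (hist_law (Suc t)) (h @ [(\<kappa>, a, s)]) = pmf (hist_law t) h * pmf (pol h) \<kappa> * slot_prob \<kappa> a s"
proof -
  let ?x = "h @ [(\<kappa>, a, s)]"
  have pmf_eq: "pmf (hist_law t) x = measure_pmf.expectation (state t) (\<lambda>st. of_bool (fst st = x))"
    for t x
    by (simp add: hist_law_def pmf_map expectation_of_bool_eq_prob vimage_def)
  have step: "measure_pmf.expectation (sys_step K lam mu pol (h', q, qs)) (\<lambda>y. of_bool (fst y = ?x)) =
      of_bool (h' = h) * (pmf (pol h) \<kappa> * slot_prob \<kappa> a s)" for h' q qs
  proof -
    have "measure_pmf.expectation (sys_step K lam mu pol (h', q, qs)) (\<lambda>y. of_bool (fst y = ?x)) =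
        (\<Sum>\<kappa>'\<in>set_pmf (pol h'). pmf (pol h') \<kappa>' * of_bool (\<kappa>' = \<kappa>) * (of_bool (h' = h) * slot_prob \<kappa> a s))"
      unfolding expectation_step_history[of h' q qs "\<lambda>x. of_bool (x = ?x)"]
      by (intro sum.cong refl) (auto simp: slot_prob_def)
    also have "\<dots> = of_bool (h' = h) * (pmf (pol h) \<kappa> * slot_prob \<kappa> a s)"
      by (auto simp: sum_policy_mult_of_bool simp flip: sum_distrib_right)
    finally show ?thesis .
  qed
  have "pmf (hist_law (Suc t)) ?x = measure_pmf.expectation (state t)
      (\<lambda>st. measure_pmf.expectation (sys_step K lam mu pol st) (\<lambda>y. of_bool (fst y = ?x)))"
    unfolding pmf_eq by (rule expectation_state_Suc[where B=1]) auto
  also have "\<dots> = measure_pmf.expectation (state t) (\<lambda>st. of_bool (fst st = h) * (pmf (pol h) \<kappa> * slot_prob \<kappa> a s))"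
    by (rule expectation_cong_triple) (simp add: step)
  also have "\<dots> = pmf (hist_law t) h * pmf (pol h) \<kappa> * slot_prob \<kappa> a s"
    unfolding pmf_eq by simp
  finally show ?thesis .
qed

end

section \<open>Divergence inequalities\<close>

lemma sum_le_sum_mult_markov:
  fixes P g :: "'a \<Rightarrow> real"
  assumes "finite F" "A \<subseteq> F"
    and "\<And>x. x \<in> F \<Longrightarrow> 0 \<le> P x" "\<And>x. x \<in> F \<Longrightarrow> 0 \<le> g x" "\<And>x. x \<in> A \<Longrightarrow> 1 \<le> g x"
  shows "sum P A \<le> (\<Sum>x\<in>F. P x * g x)"
proof -
  have "sum P A \<le> (\<Sum>x\<in>A. P x * g x)"
  proof (rule sum_mono)
    fix x assume "x \<in> A"
    with assms mult_left_mono[of 1 "g x" "P x"] show "P x \<le> P x * g x"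
      by auto
  qed
  also have "\<dots> \<le> (\<Sum>x\<in>F. P x * g x)"
    using assms by (intro sum_mono2) auto
  finally show ?thesis .
qed

lemma sum_pos_of_ratio:
  fixes P Q :: "'a \<Rightarrow> real"
  assumes "finite B" "\<And>x. x \<in> B \<Longrightarrow> 0 \<le> Q x" "\<And>x. x \<in> B \<Longrightarrow> 0 < P x \<Longrightarrow> 0 < Q x"
    and "0 < sum P B"
  shows "0 < sum Q B"
proof -
  obtain x where x: "x \<in> B" "0 < P x"
    using assms(4) by (metis not_le sum_nonpos)
  have "Q x \<le> sum Q B"
    by (rule member_le_sum) (use x assms in auto)
  with assms(3)[OF x] show ?thesis
    by simp
qed

lemma log_sum_inequality:
  fixes P Q L :: "'a \<Rightarrow> real"
  assumes fin: "finite B"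
    and nonneg: "\<And>x. x \<in> B \<Longrightarrow> 0 \<le> P x \<and> 0 \<le> Q x"
    and ratio: "\<And>x. x \<in> B \<Longrightarrow> 0 < P x \<Longrightarrow> 0 < Q x \<and> L x = ln (P x / Q x)"
    and pos: "0 < sum P B"
  shows "sum P B * ln (sum P B / sum Q B) \<le> (\<Sum>x\<in>B. P x * L x)"
proof -
  let ?p = "sum P B" and ?q = "sum Q B"
  have q_pos: "0 < ?q"
    by (rule sum_pos_of_ratio[OF fin _ _ pos]) (use nonneg ratio in auto)
  have "P x * ln (?p / ?q) - P x * L x \<le> Q x * (?p / ?q) - P x" if x: "x \<in> B" for x
  proof (cases "P x = 0")
    case True
    then show ?thesis
      using nonneg[OF x] pos q_pos by simp
  next
    case False
    with nonneg[OF x] have Px: "0 < P x"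
      by simp
    with ratio[OF x] have Qx: "0 < Q x" and Lx: "L x = ln (P x / Q x)"
      by auto
    have "ln (?p / ?q) - L x = ln ((Q x * ?p) / (P x * ?q))"
      unfolding Lx using Px Qx pos q_pos by (simp add: ln_div ln_mult)
    also have "\<dots> \<le> (Q x * ?p) / (P x * ?q) - 1"
      using Px Qx pos q_pos by (intro ln_le_minus_one) simp
    finally have "P x * (ln (?p / ?q) - L x) \<le> P x * ((Q x * ?p) / (P x * ?q) - 1)"
      using Px by (intro mult_left_mono) auto
    also have "\<dots> = Q x * (?p / ?q) - P x"
      using Px by (simp add: field_simps)
    finally show ?thesis
      by (simp add: algebra_simps)
  qed
  then have "(\<Sum>x\<in>B. P x * ln (?p / ?q) - P x * L x) \<le> (\<Sum>x\<in>B. Q x * (?p / ?q) - P x)"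
    by (rule sum_mono)
  also have "\<dots> = ?q * (?p / ?q) - ?p"
    by (simp only: sum_subtractf sum_distrib_right)
  also have "\<dots> = 0"
    using q_pos by simp
  finally show ?thesis
    by (simp add: sum_subtractf sum_distrib_right[symmetric])
qed

lemma x_ln_x_ge_minus_one: "0 < x \<Longrightarrow> -1 \<le> x * ln (x :: real)"
proof -
  assume x: "0 < x"
  have "- ln x \<le> 1 / x - 1"
    using ln_le_minus_one[of "1 / x"] x by (simp add: ln_div)
  then have "x * (- ln x) \<le> x * (1 / x - 1)"
    using x by (intro mult_left_mono) auto
  also have "\<dots> \<le> 1"
    using x by (simp add: field_simps)
  finally show ?thesis
    by simp
qed

lemma log_sum_ge_minus_ln:
  fixes P Q L :: "'a \<Rightarrow> real"
  assumes fin: "finite B"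
    and nonneg: "\<And>x. x \<in> B \<Longrightarrow> 0 \<le> P x \<and> 0 \<le> Q x"
    and ratio: "\<And>x. x \<in> B \<Longrightarrow> 0 < P x \<Longrightarrow> 0 < Q x \<and> L x = ln (P x / Q x)"
  shows "sum P B * (- ln (sum Q B)) - 1 \<le> (\<Sum>x\<in>B. P x * L x)"
proof (cases "sum P B = 0")
  case True
  with fin nonneg have "\<forall>x\<in>B. P x = 0"
    by (simp add: sum_nonneg_eq_0_iff)
  then show ?thesis
    by simp
next
  case False
  with nonneg have pos: "0 < sum P B"
    by (simp add: sum_nonneg order_le_neq_trans)
  have q_pos: "0 < sum Q B"
    by (rule sum_pos_of_ratio[OF fin _ _ pos]) (use nonneg ratio in auto)
  have "sum P B * (- ln (sum Q B)) - 1 \<le> sum P B * (- ln (sum Q B)) + sum P B * ln (sum P B)"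
    using x_ln_x_ge_minus_one[OF pos] by simp
  also have "\<dots> = sum P B * ln (sum P B / sum Q B)"
    using pos q_pos by (simp add: ln_div algebra_simps)
  also have "\<dots> \<le> (\<Sum>x\<in>B. P x * L x)"
    by (rule log_sum_inequality[OF fin nonneg ratio pos])
  finally show ?thesis .
qed

text \<open>A high-probability form of the data-processing inequality: if an event \<open>A\<close> has
  probability \<open>P(A)\<close> under \<open>P\<close> and is unlikely under \<open>Q\<close>, the divergence of \<open>P\<close> from \<open>Q\<close> is
  at least about \<open>P(A) ln (1 / Q(A))\<close>.\<close>

lemma divergence_ge_event:
  fixes P Q L :: "'a \<Rightarrow> real"
  assumes fin: "finite F" and A: "A \<subseteq> F"
    and nonneg: "\<And>x. x \<in> F \<Longrightarrow> 0 \<le> P x \<and> 0 \<le> Q x"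
    and ratio: "\<And>x. x \<in> F \<Longrightarrow> 0 < P x \<Longrightarrow> 0 < Q x \<and> L x = ln (P x / Q x)"
    and Q_sum: "sum Q F = 1"
  shows "sum P A * (- ln (sum Q A)) - 2 \<le> (\<Sum>x\<in>F. P x * L x)"
proof -
  have split: "sum f F = sum f A + sum f (F - A)" for f :: "'a \<Rightarrow> real"
    using sum.subset_diff[OF A fin] by (simp add: add.commute)
  have "sum P A * (- ln (sum Q A)) - 1 \<le> (\<Sum>x\<in>A. P x * L x)"
    by (rule log_sum_ge_minus_ln) (use fin A nonneg ratio in \<open>auto intro: finite_subset\<close>)
  moreover have "sum P (F - A) * (- ln (sum Q (F - A))) - 1 \<le> (\<Sum>x\<in>F - A. P x * L x)"
    by (rule log_sum_ge_minus_ln) (use fin nonneg ratio in auto)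
  moreover have "0 \<le> sum P (F - A) * (- ln (sum Q (F - A)))"
  proof -
    have "0 \<le> sum Q A" "0 \<le> sum Q (F - A)"
      using nonneg A by (auto intro: sum_nonneg)
    with split[of Q] Q_sum have "ln (sum Q (F - A)) \<le> 0"
      by (cases "sum Q (F - A) = 0") auto
    then show ?thesis
      using nonneg by (intro mult_nonneg_nonneg sum_nonneg) auto
  qed
  ultimately show ?thesis
    using split[of "\<lambda>x. P x * L x"] by linarith
qed

lemma bern_KL_nonneg:
  assumes "0 \<le> p" "p < 1" "0 < q" "q < 1"
  shows "0 \<le> bern_KL p q"
proof (cases "p = 0")
  case True
  have "1 \<le> 1 / (1 - q)"
    using assms by simp
  with True show ?thesis
    by (simp add: bern_KL_def)
next
  case False
  with assms have p: "0 < p"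
    by simp
  have "p * ln (q / p) + (1 - p) * ln ((1 - q) / (1 - p)) \<le> p * (q / p - 1) + (1 - p) * ((1 - q) / (1 - p) - 1)"
    using p assms by (intro add_mono mult_left_mono ln_le_minus_one) auto
  also have "\<dots> = 0"
    using p assms by (simp add: field_simps)
  finally have "p * ln (q / p) + (1 - p) * ln ((1 - q) / (1 - p)) \<le> 0" .
  moreover have "bern_KL p q = - (p * ln (q / p) + (1 - p) * ln ((1 - q) / (1 - p)))"
    using p assms by (simp add: bern_KL_def ln_div algebra_simps)
  ultimately show ?thesis
    by linarith
qed

lemma bern_KL_antimono:
  assumes "0 \<le> p" "p \<le> p'" "p' \<le> q" "q < 1"
  shows "bern_KL p' q \<le> bern_KL p q"
proof (cases "p' = 0")
  case False
  with assms have p': "0 < p'"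
    by simp
  have "p * ln (p / q) = p * ln (p / p') + p * ln (p' / q)"
    using p' assms by (cases "p = 0") (simp_all add: ln_div algebra_simps)
  moreover have "(1 - p) * ln ((1 - p) / (1 - q)) =
      (1 - p) * ln ((1 - p) / (1 - p')) + (1 - p) * ln ((1 - p') / (1 - q))"
    using assms p' by (simp add: ln_div algebra_simps)
  ultimately have "bern_KL p q - bern_KL p' q =
      bern_KL p p' + (p' - p) * (ln ((1 - p') / (1 - q)) - ln (p' / q))"
    unfolding bern_KL_def by (simp add: algebra_simps)
  moreover have "0 \<le> bern_KL p p'"
    using assms p' by (intro bern_KL_nonneg) auto
  moreover have "0 \<le> (p' - p) * (ln ((1 - p') / (1 - q)) - ln (p' / q))"
  proof (rule mult_nonneg_nonneg)
    have "0 < q"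
      using p' assms(3) by linarith
    then have "ln (p' / q) \<le> 0" "0 \<le> ln ((1 - p') / (1 - q))"
      using assms p' by auto
    then show "0 \<le> ln ((1 - p') / (1 - q)) - ln (p' / q)"
      by linarith
  qed (use assms in simp)
  ultimately show ?thesis
    by linarith
qed (use assms in simp)

lemma ln_prod_list:
  fixes f :: "'a \<Rightarrow> real"
  assumes "\<forall>x\<in>set xs. 0 \<le> f x" "0 < prod_list (map f xs)"
  shows "ln (prod_list (map f xs)) = (\<Sum>x\<leftarrow>xs. ln (f x))"
proof -
  have "(\<forall>x\<in>set xs. 0 < f x) \<and> ln (prod_list (map f xs)) = (\<Sum>x\<leftarrow>xs. ln (f x))"
    using assms
  proof (induction xs)
    case (Cons x xs)
    have "0 \<le> prod_list (map f xs)"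
      by (rule prod_list_nonneg) (use Cons.prems in force)
    with Cons.prems have "0 < f x" "0 < prod_list (map f xs)"
      by (auto simp: zero_less_mult_iff)
    with Cons show ?case
      by (simp add: ln_mult)
  qed simp
  then show ?thesis
    by blast
qed
section \<open>Change of measure\<close>

text \<open>In the boosted instance the suboptimal server \<open>k\<close> has rate \<open>(\<mu>\<^sup>* + 1) / 2\<close>, which makes
  it the unique best server. The two laws of the history differ only in the factors of the slots
  in which \<open>k\<close> was scheduled.\<close>

locale queue_bandit_boost = queue_bandit +
  fixes k :: nat
  assumes k_in: "k \<in> {1..K}" and k_suboptimal: "k \<noteq> best K mu" and mu_k_star_less_1: "mu (best K mu) < 1"
begin

abbreviation boosted :: real where
  "boosted \<equiv> (mu k_star + 1) / 2"

lemma boosted_gt: "mu k_star < boosted" and boosted_less_1: "boosted < 1" and boosted_pos: "0 < boosted"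
  using mu_k_star_less_1 mu_nonneg[OF k_star_in] by auto

lemma is_best_boosted: "is_best K (mu(k := boosted)) k"
  unfolding is_best_def
proof (intro conjI ballI impI)
  fix j assume "j \<in> {1..K}" "j \<noteq> k"
  with mu_le_k_star[of j] boosted_gt show "(mu(k := boosted)) j < (mu(k := boosted)) k"
    by simp
qed (rule k_in)

lemma best_boosted: "best K (mu(k := boosted)) = k"
  by (rule best_eqI[OF is_best_boosted])

lemma qb_instance_boosted: "qb_instance K lam (mu(k := boosted))"
  unfolding qb_instance_def best_boosted
  using is_best_boosted lam_nonneg lam_less boosted_gt boosted_less_1 mu_nonneg mu_le_1 by auto

sublocale boost: queue_bandit K lam "mu(k := boosted)" pol
  by unfold_locales (rule qb_instance_boosted, rule valid)

definition lr_factor :: "nat \<times> bool \<times> bool \<Rightarrow> real" where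
  "lr_factor e = (if fst e = k then (if snd (snd e) then mu k / boosted else (1 - mu k) / (1 - boosted)) else 1)"

definition log_lr :: "hist \<Rightarrow> real" where
  "log_lr h = (\<Sum>e\<leftarrow>h. ln (lr_factor e))"

lemma lr_factor_nonneg: "0 \<le> lr_factor e"
  unfolding lr_factor_def using boosted_less_1 mu_nonneg[OF k_in] mu_le_1[OF k_in] mu_nonneg[OF k_star_in]
  by auto

lemma pmf_hist_law_eq_lr: "pmf (hist_law t) h = prod_list (map lr_factor h) * pmf (boost.hist_law t) h"
proof (induction t arbitrary: h)
  case 0
  show ?case
    by (simp only: pmf_hist_law_0 boost.pmf_hist_law_0) simp
next
  case (Suc t)
  have slot: "slot_prob \<kappa> a s = lr_factor (\<kappa>, a, s) * boost.slot_prob \<kappa> a s" for \<kappa> a s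
    unfolding slot_prob_def boost.slot_prob_def lr_factor_def using boosted_pos boosted_less_1 by auto
  show ?case
  proof (cases h rule: rev_cases)
    case (snoc h' e)
    obtain \<kappa> a s where e: "e = (\<kappa>, a, s)"
      by (cases e)
    have "pmf (hist_law (Suc t)) h = pmf (hist_law t) h' * pmf (pol h') \<kappa> * slot_prob \<kappa> a s"
      by (simp only: snoc e pmf_hist_law_snoc)
    also have "\<dots> = prod_list (map lr_factor h') * pmf (boost.hist_law t) h' * pmf (pol h') \<kappa> *
        (lr_factor (\<kappa>, a, s) * boost.slot_prob \<kappa> a s)"
      by (simp only: Suc.IH slot)
    also have "\<dots> = prod_list (map lr_factor h) * pmf (boost.hist_law (Suc t)) h"
      by (simp only: snoc e boost.pmf_hist_law_snoc) (simp add: mult_ac)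
    finally show ?thesis .
  qed (simp only: pmf_hist_law_Nil_Suc boost.pmf_hist_law_Nil_Suc mult_zero_right)
qed

lemma log_lr_eq_ln_ratio:
  assumes "0 < pmf (hist_law t) h"
  shows "0 < pmf (boost.hist_law t) h \<and> log_lr h = ln (pmf (hist_law t) h / pmf (boost.hist_law t) h)"
proof -
  have "0 \<le> prod_list (map lr_factor h)"
    by (rule prod_list_nonneg) (auto simp: lr_factor_nonneg)
  with assms have "0 < prod_list (map lr_factor h)" "0 < pmf (boost.hist_law t) h"
    unfolding pmf_hist_law_eq_lr by (auto simp: zero_less_mult_iff)
  then show ?thesis
    using ln_prod_list[of h lr_factor] lr_factor_nonneg
    unfolding log_lr_def pmf_hist_law_eq_lr by auto
qed

lemma abs_log_lr_le:
  "\<bar>log_lr h\<bar> \<le> length h * (\<bar>ln (mu k / boosted)\<bar> + \<bar>ln ((1 - mu k) / (1 - boosted))\<bar>)"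
proof (induction h)
  case (Cons e h)
  have "\<bar>log_lr (e # h)\<bar> \<le> \<bar>ln (lr_factor e)\<bar> + \<bar>log_lr h\<bar>"
    by (simp add: log_lr_def abs_triangle_ineq)
  also have "\<bar>ln (lr_factor e)\<bar> \<le> \<bar>ln (mu k / boosted)\<bar> + \<bar>ln ((1 - mu k) / (1 - boosted))\<bar>"
    unfolding lr_factor_def by auto
  finally show ?case
    using Cons.IH by (simp add: algebra_simps)
qed (simp add: log_lr_def)

text \<open>Wald's identity for the log-likelihood ratio.\<close>

lemma expectation_log_lr:
  "measure_pmf.expectation (state t) (\<lambda>st. log_lr (fst st)) = bern_KL (mu k) boosted * exp_pulls K lam mu pol k t"
proof (induction t)
  case 0
  then show ?case
    by (simp add: log_lr_def exp_pulls_eq_sum)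
next
  case (Suc t)
  let ?M = "\<bar>ln (mu k / boosted)\<bar> + \<bar>ln ((1 - mu k) / (1 - boosted))\<bar>"
  have bounded: "\<bar>log_lr (fst st)\<bar> \<le> real t * ?M" if "st \<in> set_pmf (state t)" for st t
    using abs_log_lr_le[of "fst st"] length_state[OF that] by simp
  have step: "measure_pmf.expectation (sys_step K lam mu pol (h, q, qs)) (\<lambda>y. log_lr (fst y)) =
      log_lr h + pmf (pol h) k * bern_KL (mu k) boosted" for h q qs
  proof -
    have "lam * (mu \<kappa> * log_lr (h @ [(\<kappa>, True, True)]) + (1 - mu \<kappa>) * log_lr (h @ [(\<kappa>, True, False)])) +
        (1 - lam) * (mu \<kappa> * log_lr (h @ [(\<kappa>, False, True)]) + (1 - mu \<kappa>) * log_lr (h @ [(\<kappa>, False, False)]))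
        = log_lr h + of_bool (\<kappa> = k) * bern_KL (mu k) boosted" for \<kappa>
      by (cases "\<kappa> = k") (auto simp: log_lr_def lr_factor_def bern_KL_def algebra_simps)
    then show ?thesis
      unfolding expectation_step_history[of h q qs log_lr] by (simp add: sum_policy_affine)
  qed
  have "measure_pmf.expectation (state (Suc t)) (\<lambda>st. log_lr (fst st)) =
      measure_pmf.expectation (state t) (\<lambda>st. measure_pmf.expectation (sys_step K lam mu pol st) (\<lambda>y. log_lr (fst y)))"
    by (rule expectation_state_Suc[where B="Suc t * ?M"]) (rule bounded)
  also have "\<dots> = measure_pmf.expectation (state t)
      (\<lambda>st. log_lr (fst st) + pmf (pol (fst st)) k * bern_KL (mu k) boosted)"
    by (rule expectation_cong_triple) (simp add: step)
  also have "\<dots> = measure_pmf.expectation (state t) (\<lambda>st. log_lr (fst st)) + sched_prob k t * bern_KL (mu k) boosted"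
    unfolding sched_prob_def
    by (simp add: integrable_policy_pmf integrable_measure_pmf_bounded[OF bounded])
  finally show ?case
    using Suc.IH by (simp add: exp_pulls_Suc algebra_simps)
qed

definition few_pulls :: "nat \<Rightarrow> hist set" where
  "few_pulls t = {h \<in> histories K t. num_pulls k h \<le> real t / 2}"

lemma few_pulls_subset: "few_pulls t \<subseteq> histories K t"
  unfolding few_pulls_def by auto

lemma prob_few_pulls_ge_half:
  assumes "0 < t" and "exp_pulls K lam mu pol k t \<le> real t / 4"
  shows "1 / 2 \<le> (\<Sum>h\<in>few_pulls t. pmf (hist_law t) h)"
proof -
  have many: "1 \<le> num_pulls k h * (2 / real t)" if "h \<in> histories K t - few_pulls t" for h
    using that assms(1) by (auto simp: few_pulls_def field_simps)
  have "(\<Sum>h\<in>histories K t - few_pulls t. pmf (hist_law t) h) \<le>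
      (\<Sum>h\<in>histories K t. pmf (hist_law t) h * (num_pulls k h * (2 / real t)))"
    by (rule sum_le_sum_mult_markov[OF finite_histories Diff_subset _ _ many]) (simp_all add: num_pulls_nonneg)
  also have "\<dots> = 2 / real t * exp_pulls K lam mu pol k t"
    by (simp add: exp_pulls_eq_expectation expectation_state_history sum_distrib_left mult_ac)
  also have "\<dots> \<le> 1 / 2"
    using assms by (simp add: field_simps)
  finally show ?thesis
    using sum.subset_diff[OF few_pulls_subset finite_histories, of "pmf (hist_law t)"] sum_pmf_hist_law[of t]
    by simp
qed

lemma boost_prob_few_pulls_le:
  assumes "0 < t"
  shows "(\<Sum>h\<in>few_pulls t. pmf (boost.hist_law t) h) \<le>
    2 / real t * (\<Sum>j\<in>{1..K} - {k}. exp_pulls K lam (mu(k := boosted)) pol j t)"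
proof -
  let ?others = "\<lambda>h. \<Sum>j\<in>{1..K} - {k}. num_pulls j h"
  have others: "?others h = real t - num_pulls k h" if "h \<in> histories K t" for h
    using sum_num_pulls[of h K] sum.remove[OF _ k_in, of "\<lambda>j. num_pulls j h"] that
    by (simp add: histories_def)
  have few: "1 \<le> ?others h * (2 / real t)" if "h \<in> few_pulls t" for h
    using that assms others[of h] by (simp add: few_pulls_def field_simps)
  have "(\<Sum>h\<in>few_pulls t. pmf (boost.hist_law t) h) \<le>
      (\<Sum>h\<in>histories K t. pmf (boost.hist_law t) h * (?others h * (2 / real t)))"
    by (rule sum_le_sum_mult_markov[OF finite_histories few_pulls_subset _ _ few])
      (simp_all add: sum_nonneg num_pulls_nonneg)
  also have "\<dots> = 2 / real t * (\<Sum>j\<in>{1..K} - {k}. \<Sum>h\<in>histories K t. pmf (boost.hist_law t) h * num_pulls j h)"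
    by (subst sum.swap) (simp add: sum_distrib_left sum_distrib_right mult_ac)
  also have "\<dots> = 2 / real t * (\<Sum>j\<in>{1..K} - {k}. exp_pulls K lam (mu(k := boosted)) pol j t)"
    by (simp add: boost.exp_pulls_eq_expectation boost.expectation_state_history)
  finally show ?thesis .
qed

lemma KL_pulls_ge_ln:
  assumes "0 < t" and "exp_pulls K lam mu pol k t \<le> real t / 4"
    and "(\<Sum>j\<in>{1..K} - {k}. exp_pulls K lam (mu(k := boosted)) pol j t) \<le> B" and "0 < B"
    and "0 \<le> ln (real t / (2 * B))"
  shows "ln (real t / (2 * B)) / 2 - 2 \<le> bern_KL (mu k) boosted * exp_pulls K lam mu pol k t"
proof -
  let ?P = "\<lambda>A. \<Sum>h\<in>A. pmf (hist_law t) h" and ?Q = "\<lambda>A. \<Sum>h\<in>A. pmf (boost.hist_law t) h"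
  have P: "1 / 2 \<le> ?P (few_pulls t)"
    by (rule prob_few_pulls_ge_half[OF assms(1,2)])
  have "0 < ?Q (few_pulls t)"
  proof (rule sum_pos_of_ratio)
    show "finite (few_pulls t)"
      using finite_histories few_pulls_subset by (rule finite_subset[rotated])
    show "0 < pmf (boost.hist_law t) h" if "h \<in> few_pulls t" "0 < pmf (hist_law t) h" for h
      using log_lr_eq_ln_ratio[OF that(2)] ..
    show "0 < ?P (few_pulls t)"
      using P by simp
  qed simp
  moreover have "?Q (few_pulls t) \<le> 2 * B / real t"
    using boost_prob_few_pulls_le[OF assms(1)] assms(1,3) by (simp add: field_simps)
  ultimately have "ln (?Q (few_pulls t)) \<le> ln (2 * B / real t)"
    using assms(1,4) by simp
  also have "\<dots> = - ln (real t / (2 * B))"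
    using assms(1,4) by (simp add: ln_div)
  finally have "ln (real t / (2 * B)) \<le> - ln (?Q (few_pulls t))"
    by simp
  then have "1 / 2 * ln (real t / (2 * B)) \<le> ?P (few_pulls t) * (- ln (?Q (few_pulls t)))"
    by (rule mult_mono[OF P]) (use P assms(5) in auto)
  moreover have "?P (few_pulls t) * (- ln (?Q (few_pulls t))) - 2 \<le>
      (\<Sum>h\<in>histories K t. pmf (hist_law t) h * log_lr h)"
  proof (rule divergence_ge_event[OF finite_histories few_pulls_subset])
    show "0 < pmf (boost.hist_law t) h \<and> log_lr h = ln (pmf (hist_law t) h / pmf (boost.hist_law t) h)"
      if "h \<in> histories K t" "0 < pmf (hist_law t) h" for h
      by (rule log_lr_eq_ln_ratio[OF that(2)])
  qed (simp_all add: boost.sum_pmf_hist_law)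
  moreover have "(\<Sum>h\<in>histories K t. pmf (hist_law t) h * log_lr h) =
      bern_KL (mu k) boosted * exp_pulls K lam mu pol k t"
    by (simp add: expectation_log_lr flip: expectation_state_history)
  ultimately show ?thesis
    by linarith
qed

end

lemma bigo_powr_eventually_le:
  fixes f :: "nat \<Rightarrow> real"
  assumes "f \<in> O(\<lambda>t. real t powr a)"
  shows "\<exists>c>0. eventually (\<lambda>t. f t \<le> c * real t powr a) sequentially"
  using assms
proof (elim landau_o.bigE)
  fix c :: real
  assume "0 < c" and "eventually (\<lambda>t. norm (f t) \<le> c * norm (real t powr a)) at_top"
  then show ?thesis
    by (auto elim!: eventually_mono)
qed

context queue_bandit_boost
begin

text \<open>The Lai--Robbins argument: by consistency, under the boosted instance the policy rarely
  schedules servers other than \<open>k\<close>, so histories with few pulls of \<open>k\<close> are unlikely there,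
  while under the original instance they are likely.\<close>

lemma KL_pulls_ge_ln_eventually:
  assumes consistent: "alpha_consistent K \<alpha> pol" and \<alpha>: "0 < \<alpha>" "\<alpha> < 1"
  shows "\<exists>C. eventually (\<lambda>t. (1 - \<alpha>) / 2 * ln (real t) - C \<le>
    bern_KL (mu k) boosted * exp_pulls K lam mu pol k t) sequentially"
proof -
  let ?others = "\<lambda>t. \<Sum>j\<in>{1..K} - {k}. exp_pulls K lam (mu(k := boosted)) pol j t"
  have "(\<lambda>t. exp_pulls K lam mu pol k t) \<in> O(\<lambda>t. real t powr \<alpha>)"
    using consistent inst k_in k_suboptimal unfolding alpha_consistent_def by blast
  then obtain C1 where C1: "eventually (\<lambda>t. exp_pulls K lam mu pol k t \<le> C1 * real t powr \<alpha>) sequentially"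
    using bigo_powr_eventually_le by blast
  have "\<forall>j\<in>{1..K}. j \<noteq> best K (mu(k := boosted)) \<longrightarrow>
      (\<lambda>t. exp_pulls K lam (mu(k := boosted)) pol j t) \<in> O(\<lambda>t. real t powr \<alpha>)"
    using consistent qb_instance_boosted unfolding alpha_consistent_def by blast
  then have "?others \<in> O(\<lambda>t. real t powr \<alpha>)"
    unfolding best_boosted by (intro big_sum_in_bigo) auto
  then obtain C2 where "0 < C2" and C2: "eventually (\<lambda>t. ?others t \<le> C2 * real t powr \<alpha>) sequentially"
    using bigo_powr_eventually_le by blast
  have "eventually (\<lambda>t. C1 * real t powr \<alpha> \<le> real t / 4) sequentially"
    "eventually (\<lambda>t::nat. 0 \<le> (1 - \<alpha>) * ln (real t) - ln (2 * C2)) sequentially"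
    using \<alpha> by real_asymp+
  with C1 C2 eventually_gt_at_top[of 0]
  have "eventually (\<lambda>t. (1 - \<alpha>) / 2 * ln (real t) - (ln (2 * C2) / 2 + 2) \<le>
      bern_KL (mu k) boosted * exp_pulls K lam mu pol k t) sequentially"
  proof eventually_elim
    case (elim t)
    then have ln_eq: "ln (real t / (2 * (C2 * real t powr \<alpha>))) = (1 - \<alpha>) * ln (real t) - ln (2 * C2)"
      using \<open>0 < C2\<close> by (simp add: ln_div ln_mult ln_powr algebra_simps)
    have "ln (real t / (2 * (C2 * real t powr \<alpha>))) / 2 - 2 \<le> bern_KL (mu k) boosted * exp_pulls K lam mu pol k t"
      using elim \<open>0 < C2\<close> ln_eq by (intro KL_pulls_ge_ln) auto
    then show ?case
      unfolding ln_eq by (simp add: algebra_simps)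
  qed
  then show ?thesis
    by blast
qed

end

lemma sum_of_bool_less_eq_min: "(\<Sum>s<t. of_bool (s < m) :: real) = real (min t m)"
  by (induction t) (auto simp: min_def)

lemma sum_inverse_le_1_plus_ln: "1 \<le> t \<Longrightarrow> (\<Sum>s<t. 1 / (real s + 1)) \<le> 1 + ln (real t)"
  using euler_mascheroni_sequence_decreasing[of 1 t] by (simp add: harm_altdef field_simps)

context queue_bandit
begin

lemma mu_min_nonneg: "0 \<le> mu_min K mu"
  and mu_min_le: "j \<in> {1..K} \<Longrightarrow> mu_min K mu \<le> mu j"
proof -
  have "Min (mu ` {1..K}) \<in> mu ` {1..K}"
    using k_star_in by (intro Min_in) auto
  then show "0 \<le> mu_min K mu"
    unfolding mu_min_def using mu_nonneg by auto
  show "j \<in> {1..K} \<Longrightarrow> mu_min K mu \<le> mu j"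
    unfolding mu_min_def by auto
qed

lemma KL_min_pulls_ge_ln_eventually:
  assumes consistent: "alpha_consistent K \<alpha> pol" and \<alpha>: "0 < \<alpha>" "\<alpha> < 1" and "mu k_star < 1"
    and k: "k \<in> {1..K} - {k_star}"
  shows "\<exists>C. eventually (\<lambda>t. (1 - \<alpha>) / 2 * ln (real t) - C \<le>
    bern_KL (mu_min K mu) ((mu k_star + 1) / 2) * exp_pulls K lam mu pol k t) sequentially"
proof -
  let ?KL = "bern_KL (mu_min K mu) ((mu k_star + 1) / 2)"
  interpret boost_k: queue_bandit_boost K lam mu pol k
    by unfold_locales (use k \<open>mu k_star < 1\<close> in auto)
  have KL_le: "bern_KL (mu k) boost_k.boosted \<le> ?KL"
    using k boost_k.boosted_gt boost_k.boosted_less_1 mu_le_k_star[of k] mu_min_nonneg mu_min_le[of k]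
    by (intro bern_KL_antimono) auto
  obtain C where "eventually (\<lambda>t. (1 - \<alpha>) / 2 * ln (real t) - C \<le>
      bern_KL (mu k) boost_k.boosted * exp_pulls K lam mu pol k t) sequentially"
    using boost_k.KL_pulls_ge_ln_eventually[OF consistent \<alpha>] by blast
  then have "eventually (\<lambda>t. (1 - \<alpha>) / 2 * ln (real t) - C \<le> ?KL * exp_pulls K lam mu pol k t) sequentially"
  proof (rule eventually_mono)
    fix t
    assume "(1 - \<alpha>) / 2 * ln (real t) - C \<le> bern_KL (mu k) boost_k.boosted * exp_pulls K lam mu pol k t"
    also have "\<dots> \<le> ?KL * exp_pulls K lam mu pol k t"
      by (rule mult_right_mono[OF KL_le exp_pulls_nonneg])
    finally show "(1 - \<alpha>) / 2 * ln (real t) - C \<le> ?KL * exp_pulls K lam mu pol k t" .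
  qed
  then show ?thesis ..
qed

lemma KL_suboptimal_pulls_ge_ln_eventually:
  assumes consistent: "alpha_consistent K \<alpha> pol" and \<alpha>: "0 < \<alpha>" "\<alpha> < 1" and "mu k_star < 1"
  shows "\<exists>C. eventually (\<lambda>t. (real K - 1) * ((1 - \<alpha>) / 2 * ln (real t)) - C \<le>
    bern_KL (mu_min K mu) ((mu k_star + 1) / 2) * (\<Sum>k\<in>{1..K} - {k_star}. exp_pulls K lam mu pol k t))
    sequentially"
proof -
  let ?J = "{1..K} - {k_star}" and ?KL = "bern_KL (mu_min K mu) ((mu k_star + 1) / 2)"
  have "\<exists>C. eventually (\<lambda>t. (1 - \<alpha>) / 2 * ln (real t) - C \<le> ?KL * exp_pulls K lam mu pol k t) sequentially"
    if "k \<in> ?J" for k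
    by (rule KL_min_pulls_ge_ln_eventually[OF consistent \<alpha> \<open>mu k_star < 1\<close> that])
  then obtain C where "\<forall>k\<in>?J. eventually (\<lambda>t. (1 - \<alpha>) / 2 * ln (real t) - C k \<le>
      ?KL * exp_pulls K lam mu pol k t) sequentially"
    by metis
  then have "eventually (\<lambda>t. \<forall>k\<in>?J. (1 - \<alpha>) / 2 * ln (real t) - C k \<le> ?KL * exp_pulls K lam mu pol k t)
      sequentially"
    by (intro eventually_ball_finite) auto
  then have "eventually (\<lambda>t. (real K - 1) * ((1 - \<alpha>) / 2 * ln (real t)) - (\<Sum>k\<in>?J. C k) \<le>
      ?KL * (\<Sum>k\<in>?J. exp_pulls K lam mu pol k t)) sequentially"
  proof (rule eventually_mono)
    fix t
    assume bound: "\<forall>k\<in>?J. (1 - \<alpha>) / 2 * ln (real t) - C k \<le> ?KL * exp_pulls K lam mu pol k t"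
    have "real (card ?J) = real K - 1"
      using k_star_in by (simp add: of_nat_diff)
    then have "(real K - 1) * ((1 - \<alpha>) / 2 * ln (real t)) - (\<Sum>k\<in>?J. C k) =
        (\<Sum>k\<in>?J. (1 - \<alpha>) / 2 * ln (real t) - C k)"
      by (simp add: sum_subtractf)
    also have "\<dots> \<le> (\<Sum>k\<in>?J. ?KL * exp_pulls K lam mu pol k t)"
      using bound by (intro sum_mono) blast
    finally show "(real K - 1) * ((1 - \<alpha>) / 2 * ln (real t)) - (\<Sum>k\<in>?J. C k) \<le>
        ?KL * (\<Sum>k\<in>?J. exp_pulls K lam mu pol k t)"
      by (simp add: sum_distrib_left)
  qed
  then show ?thesis
    by blast
qed

lemma suboptimal_pulls_le_of_small_regret:
  assumes pos: "0 < lam * gap K mu" and "0 \<le> c"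
    and small: "\<And>n. m < n \<Longrightarrow> queue_regret K lam mu pol n < lam * gap K mu * c / real n"
    and "1 \<le> t"
  shows "(\<Sum>s<t. 1 - sched_prob k_star s) \<le> real m + c * (1 + ln (real t))"
proof -
  have "1 - sched_prob k_star s \<le> of_bool (s < m) + c / (real s + 1)" for s
  proof (cases "s < m")
    case True
    moreover have "0 \<le> c / (real s + 1)"
      using \<open>0 \<le> c\<close> by simp
    ultimately show ?thesis
      using sched_prob_nonneg[of k_star s] by simp
  next
    case False
    then have "lam * gap K mu * (1 - sched_prob k_star s) < lam * gap K mu * (c / (real s + 1))"
      using queue_regret_Suc_ge[of s] small[of "Suc s"] by (simp add: add.commute)
    with pos have "1 - sched_prob k_star s < c / (real s + 1)"
      by (simp only: mult_less_cancel_left_pos)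
    with False show ?thesis
      by simp
  qed
  then have "(\<Sum>s<t. 1 - sched_prob k_star s) \<le> (\<Sum>s<t. of_bool (s < m) + c * (1 / (real s + 1)))"
    by (intro sum_mono) simp
  also have "\<dots> = real (min t m) + c * (\<Sum>s<t. 1 / (real s + 1))"
    by (simp only: sum.distrib sum_of_bool_less_eq_min sum_distrib_left)
  also have "\<dots> \<le> real m + c * (1 + ln (real t))"
    using sum_inverse_le_1_plus_ln[OF \<open>1 \<le> t\<close>] \<open>0 \<le> c\<close> by (intro add_mono mult_left_mono) auto
  finally show ?thesis .
qed

lemma frequently_queue_regret_ge_nonpos:
  assumes "c \<le> 0"
  shows "\<exists>\<^sub>\<infinity>t. queue_regret K lam mu pol t \<ge> c / real t"
proof -
  have "c / real t \<le> queue_regret K lam mu pol t" for t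
    using queue_regret_nonneg[of t] divide_nonpos_nonneg[of c "real t"] assms by fastforce
  then show ?thesis
    by (auto simp: INFM_nat_le)
qed

lemma frequently_queue_regret_ge:
  assumes consistent: "alpha_consistent K \<alpha> pol" and \<alpha>: "0 < \<alpha>" "\<alpha> < 1"
    and "2 \<le> K" "0 < lam" "mu k_star < 1"
    and KL_pos: "0 < bern_KL (mu_min K mu) ((mu k_star + 1) / 2)"
  shows "\<exists>\<^sub>\<infinity>t. lam * gap K mu * ((1 - \<alpha>) * (real K - 1) / (4 * bern_KL (mu_min K mu) ((mu k_star + 1) / 2)))
      / real t \<le> queue_regret K lam mu pol t"
proof (rule ccontr)
  let ?KL = "bern_KL (mu_min K mu) ((mu k_star + 1) / 2)"
  define A where "A = (1 - \<alpha>) * (real K - 1) / 4"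
  assume "\<not> ?thesis"
  then obtain m where "\<And>n. m < n \<Longrightarrow> queue_regret K lam mu pol n < lam * gap K mu * (A / ?KL) / real n"
    unfolding not_INFM MOST_nat A_def by (auto simp: not_le)
  then have upper: "(\<Sum>s<t. 1 - sched_prob k_star s) \<le> real m + A / ?KL * (1 + ln (real t))" if "1 \<le> t" for t
    using that gap_pos \<open>2 \<le> K\<close> \<open>0 < lam\<close> KL_pos \<alpha> unfolding A_def
    by (intro suboptimal_pulls_le_of_small_regret) auto
  obtain C where lower: "eventually (\<lambda>t. (real K - 1) * ((1 - \<alpha>) / 2 * ln (real t)) - C \<le>
      ?KL * (\<Sum>s<t. 1 - sched_prob k_star s)) sequentially"
    using KL_suboptimal_pulls_ge_ln_eventually[OF consistent \<alpha> \<open>mu k_star < 1\<close>]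
    unfolding sum_exp_pulls_suboptimal by blast
  have "0 < A"
    unfolding A_def using \<alpha> \<open>2 \<le> K\<close> by auto
  define M where "M = (C + ?KL * real m + A + 1) / A"
  have "eventually (\<lambda>t::nat. M \<le> ln (real t)) sequentially"
    by real_asymp
  with lower eventually_ge_at_top[of 1] have "eventually (\<lambda>t::nat. False) sequentially"
  proof eventually_elim
    case (elim t)
    have "?KL * (\<Sum>s<t. 1 - sched_prob k_star s) \<le> ?KL * (real m + A / ?KL * (1 + ln (real t)))"
      using KL_pos by (intro mult_left_mono upper[OF elim(2)]) simp
    also have "\<dots> = ?KL * real m + A * (1 + ln (real t))"
      using KL_pos by (simp add: field_simps)
    finally have "?KL * (\<Sum>s<t. 1 - sched_prob k_star s) \<le> ?KL * real m + A + A * ln (real t)"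
      by (simp add: algebra_simps)
    moreover have "(real K - 1) * ((1 - \<alpha>) / 2 * ln (real t)) = 2 * A * ln (real t)"
      unfolding A_def by (simp add: field_simps)
    moreover have "C + ?KL * real m + A + 1 \<le> A * ln (real t)"
      using elim(3) \<open>0 < A\<close> by (simp add: M_def field_simps)
    ultimately show False
      using elim(1) by linarith
  qed
  then show False
    by simp
qed

end

theorem theorem1:
  fixes K :: nat and lam :: real and mu :: "nat \<Rightarrow> real"
    and \<alpha> :: real and pol :: policy
  assumes "K \<ge> 2"
    and "qb_instance K lam mu"
    and "0 < \<alpha>" and "\<alpha> < 1"
    and "valid_policy K pol"
    and "alpha_consistent K \<alpha> pol"
  shows "\<exists>\<^sub>\<infinity>t. queue_regret K lam mu pol t \<ge>
           (lam / 4 * D_mu K mu * (1 - \<alpha>) * (real K - 1)) / real t"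
proof -
  interpret queue_bandit K lam mu pol
    by unfold_locales (rule assms)+
  let ?KL = "bern_KL (mu_min K mu) ((mu k_star + 1) / 2)"
  have factor: "lam / 4 * D_mu K mu * (1 - \<alpha>) * (real K - 1) = lam * D_mu K mu * ((1 - \<alpha>) * (real K - 1) / 4)"
    by simp
  show ?thesis
  proof (cases "0 < lam * D_mu K mu")
    case False
    have "lam / 4 * D_mu K mu * (1 - \<alpha>) * (real K - 1) \<le> 0"
      unfolding factor by (rule mult_nonpos_nonneg) (use False assms(1,4) in auto)
    then show ?thesis
      by (rule frequently_queue_regret_ge_nonpos)
  next
    case True
    with lam_nonneg have "0 < lam" "0 < D_mu K mu"
      by (auto simp: zero_less_mult_iff)
    then have "mu k_star < 1" and D: "D_mu K mu = gap K mu / ?KL"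
      using mu_le_1[OF k_star_in] unfolding D_mu_def mu_star_def Let_def by (auto split: if_splits)
    with gap_pos[OF assms(1)] \<open>0 < D_mu K mu\<close> have "0 < ?KL"
      by (simp add: zero_less_divide_iff)
    have "lam / 4 * D_mu K mu * (1 - \<alpha>) * (real K - 1) =
        lam * gap K mu * ((1 - \<alpha>) * (real K - 1) / (4 * ?KL))"
      unfolding D by simp
    then show ?thesis
      using frequently_queue_regret_ge[OF assms(6,3,4,1) \<open>0 < lam\<close> \<open>mu k_star < 1\<close> \<open>0 < ?KL\<close>]
      by (simp only:)
  qed
qed

end
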